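(* Let $X$ be a compact Hausdorff space which does not contain a closed subset homeomorphic to the Stone–Čech compactification $\beta\mathbb N$ of the natural numbers. Then the Hilbert $C(X)$-module $l_2(C(X))$ is $C^*$-reflexive.
   Context: For a $C^*$-algebra $A$, $l_2(A)$ is the right Hilbert $A$-module of sequences $(a_i)$ in $A$ with $\sum_i a_i^*a_i$ norm convergent, inner product $\langle a,b\rangle=\sum_i a_i^*b_i$. For a Hilbert $A$-module $M$, the dual $M'$ is the Banach $A$-module of bounded $A$-module maps $M\to A$, and the second dual $M''$ is the module of bounded $A$-module maps $M'\to A$ (with Paschke's standard conventions); there are canonical isometric inclusions $M\subseteq M''\subseteq M'$. $M$ is called $C^*$-reflexive if $M''=M$, i.e. the canonical map $M\to M''$ is surjective. *)

theory Defs
  imports "HOL-Analysis.Analysis"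
begin

definition CX :: "('a::topological_space \<Rightarrow> complex) set" where
  "CX = {f. continuous_on UNIV f}"

definition supnorm :: "('a \<Rightarrow> 'b::real_normed_vector) \<Rightarrow> real" where
  "supnorm f = (SUP t. norm (f t))"

definition l2 :: "(nat \<Rightarrow> 'a::topological_space \<Rightarrow> complex) set" where
  "l2 = {a. (\<forall>i. a i \<in> CX) \<and>
            uniformly_convergent_on UNIV (\<lambda>n t. \<Sum>i<n. cnj (a i t) * a i t)}"

definition l2_inner :: "(nat \<Rightarrow> 'a \<Rightarrow> complex) \<Rightarrow> (nat \<Rightarrow> 'a \<Rightarrow> complex) \<Rightarrow> 'a \<Rightarrow> complex" where
  "l2_inner a b = (\<lambda>t. \<Sum>i. cnj (a i t) * b i t)"

definition l2_norm :: "(nat \<Rightarrow> 'a \<Rightarrow> complex) \<Rightarrow> real" where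
  "l2_norm a = sqrt (supnorm (l2_inner a a))"

definition l2_add :: "(nat \<Rightarrow> 'a \<Rightarrow> complex) \<Rightarrow> (nat \<Rightarrow> 'a \<Rightarrow> complex) \<Rightarrow> nat \<Rightarrow> 'a \<Rightarrow> complex" where
  "l2_add a b = (\<lambda>i t. a i t + b i t)"

definition l2_scale :: "(nat \<Rightarrow> 'a \<Rightarrow> complex) \<Rightarrow> ('a \<Rightarrow> complex) \<Rightarrow> nat \<Rightarrow> 'a \<Rightarrow> complex" where
  "l2_scale a f = (\<lambda>i t. a i t * f t)"

definition dual1 :: "((nat \<Rightarrow> 'a::topological_space \<Rightarrow> complex) \<Rightarrow> ('a \<Rightarrow> complex)) set" where
  "dual1 = {\<tau>. (\<forall>a\<in>l2. \<tau> a \<in> CX) \<and>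
              (\<forall>a\<in>l2. \<forall>b\<in>l2. \<tau> (l2_add a b) = (\<lambda>t. \<tau> a t + \<tau> b t)) \<and>
              (\<forall>a\<in>l2. \<forall>f\<in>CX. \<tau> (l2_scale a f) = (\<lambda>t. \<tau> a t * f t)) \<and>
              (\<exists>C. \<forall>a\<in>l2. supnorm (\<tau> a) \<le> C * l2_norm a)}"

definition dual_norm :: "((nat \<Rightarrow> 'a::topological_space \<Rightarrow> complex) \<Rightarrow> ('a \<Rightarrow> complex)) \<Rightarrow> real" where
  "dual_norm \<tau> = Sup {supnorm (\<tau> a) | a. a \<in> l2 \<and> l2_norm a \<le> 1}"

definition dual_add where
  "dual_add \<tau> \<sigma> = (\<lambda>a t. \<tau> a t + \<sigma> a t)"

text \<open>Paschke's right module structure on M': (tau . f)(x) = f^* tau(x)\<close>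
definition dual_scale where
  "dual_scale \<tau> f = (\<lambda>a t. cnj (f t) * \<tau> a t)"

definition dual2 ::
  "(((nat \<Rightarrow> 'a::topological_space \<Rightarrow> complex) \<Rightarrow> ('a \<Rightarrow> complex)) \<Rightarrow> ('a \<Rightarrow> complex)) set" where
  "dual2 = {F. (\<forall>\<tau>\<in>dual1. F \<tau> \<in> CX) \<and>
              (\<forall>\<tau>\<in>dual1. \<forall>\<sigma>\<in>dual1. F (dual_add \<tau> \<sigma>) = (\<lambda>t. F \<tau> t + F \<sigma> t)) \<and>
              (\<forall>\<tau>\<in>dual1. \<forall>f\<in>CX. F (dual_scale \<tau> f) = (\<lambda>t. F \<tau> t * f t)) \<and>
              (\<exists>C. \<forall>\<tau>\<in>dual1. supnorm (F \<tau>) \<le> C * dual_norm \<tau>)}"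

definition canonical_l2 ::
  "(nat \<Rightarrow> 'a \<Rightarrow> complex) \<Rightarrow> ((nat \<Rightarrow> 'a \<Rightarrow> complex) \<Rightarrow> ('a \<Rightarrow> complex)) \<Rightarrow> ('a \<Rightarrow> complex)" where
  "canonical_l2 x = (\<lambda>\<tau> t. cnj (\<tau> x t))"

definition l2_C_star_reflexive :: "'a::topological_space itself \<Rightarrow> bool" where
  "l2_C_star_reflexive _ \<longleftrightarrow>
     (\<forall>F \<in> (dual2 :: (((nat \<Rightarrow> 'a \<Rightarrow> complex) \<Rightarrow> ('a \<Rightarrow> complex)) \<Rightarrow> ('a \<Rightarrow> complex)) set).
        \<exists>x\<in>l2. \<forall>\<tau>\<in>dual1. F \<tau> = canonical_l2 x \<tau>)"

section \<open>Stone-Cech compactification of N as the space of ultrafilters on N\<close>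

definition ultrafilters_nat :: "nat set set set" where
  "ultrafilters_nat = {U. {} \<notin> U \<and> UNIV \<in> U \<and>
       (\<forall>A B. A \<in> U \<longrightarrow> B \<in> U \<longrightarrow> A \<inter> B \<in> U) \<and>
       (\<forall>A B. A \<in> U \<longrightarrow> A \<subseteq> B \<longrightarrow> B \<in> U) \<and>
       (\<forall>A. A \<in> U \<or> - A \<in> U)}"

definition betaN :: "nat set set topology" where
  "betaN = topology_generated_by {{U \<in> ultrafilters_nat. A \<in> U} | A. True}"

end

theory Submission
  imports Defs
begin

text \<open>
  Let \<open>F \<in> M''\<close>. The candidate preimage is \<open>x\<close> with \<open>x\<^sub>i = F(\<pi>\<^sub>i)\<^sup>*\<close>, where \<open>\<pi>\<^sub>i\<close> is the
  \<open>i\<close>-th coordinate functional; applying \<open>F\<close> to the finite sums of the \<open>x\<^sub>i\<^sup>* \<pi>\<^sub>i\<close> bounds the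
  partial sums of \<open>\<Sum>|x\<^sub>i|\<^sup>2\<close> uniformly.

  Call \<open>t\<close> a point of small tails of a sequence \<open>g\<close> in \<open>C(X)\<close> if the tails of \<open>\<Sum>|g\<^sub>i|\<^sup>2\<close> are
  uniformly small near \<open>t\<close>. If \<open>t\<close> is such a point for the coefficients of \<open>\<tau> \<in> M'\<close>, then
  \<open>(F \<tau>)(t) = \<Sum> x\<^sub>i\<^sup>* \<tau>\<^sub>i\<^sup>*(t)\<close>: multiplying the tail of \<open>\<tau>\<close> by a bump function at \<open>t\<close> leaves
  \<open>F\<close> unchanged at \<open>t\<close> but makes the tail small in norm. By Baire's theorem these points are
  dense, so \<open>F \<tau> = \<tau>(x)\<^sup>*\<close> as soon as \<open>x \<in> l\<^sub>2(C(X))\<close>.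

  If \<open>x \<notin> l\<^sub>2(C(X))\<close>, then \<open>\<Sum>|x\<^sub>i|\<^sup>2\<close> does not converge uniformly, and one finds points \<open>t\<^sub>k\<close>
  and disjoint blocks of indices carrying mass \<open>> e\<close> at \<open>t\<^sub>k\<close> and little mass elsewhere. For
  \<open>S \<subseteq> \<nat>\<close>, \<open>F\<close> applied to the functional with coefficients \<open>x\<^sup>*\<close> restricted to the blocks in
  \<open>S\<close> is a continuous function that is \<open>> e\<close> at \<open>t\<^sub>k\<close> for \<open>k \<in> S\<close> and \<open>< 3e/8\<close> at the other
  \<open>t\<^sub>k\<close>. So the images of complementary index sets have disjoint closures, which makes the
  closure of \<open>{t\<^sub>k}\<close> a copy of \<open>\<beta>\<nat>\<close>.
\<close>

lemma cnj_mult_self: "cnj z * z = complex_of_real ((cmod z)^2)"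
  by (metis complex_norm_square mult.commute)

lemma cmod_sum_mult_le:
  "cmod (\<Sum>i\<in>I. u i * v i) \<le> sqrt (\<Sum>i\<in>I. (cmod (u i))^2) * sqrt (\<Sum>i\<in>I. (cmod (v i))^2)"
proof -
  have "cmod (\<Sum>i\<in>I. u i * v i) \<le> (\<Sum>i\<in>I. cmod (u i) * cmod (v i))"
    by (metis (no_types, lifting) norm_mult norm_sum sum.cong)
  also have "\<dots> \<le> sqrt ((\<Sum>i\<in>I. (cmod (u i))^2) * (\<Sum>i\<in>I. (cmod (v i))^2))"
    by (rule real_le_rsqrt, rule Cauchy_Schwarz_ineq_sum)
  finally show ?thesis by (simp add: real_sqrt_mult)
qed

lemma cmod_sums_mult_le:
  assumes "(\<lambda>i. u i * v i) sums L"
    and "\<And>m. (\<Sum>i<m. (cmod (u i))^2) \<le> A" and "\<And>m. (\<Sum>i<m. (cmod (v i))^2) \<le> B"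
  shows "cmod L \<le> sqrt A * sqrt B"
proof (rule LIMSEQ_le_const2)
  show "(\<lambda>m. cmod (\<Sum>i<m. u i * v i)) \<longlonglongrightarrow> cmod L"
    using assms(1) unfolding sums_def by (rule tendsto_norm)
  have "cmod (\<Sum>i<m. u i * v i) \<le> sqrt A * sqrt B" for m
  proof -
    have "cmod (\<Sum>i<m. u i * v i) \<le> sqrt (\<Sum>i<m. (cmod (u i))^2) * sqrt (\<Sum>i<m. (cmod (v i))^2)"
      by (rule cmod_sum_mult_le)
    also have "\<dots> \<le> sqrt A * sqrt B"
      by (intro mult_mono real_sqrt_le_mono assms(2,3)) (use assms(2)[of 0] in \<open>auto intro: sum_nonneg\<close>)
    finally show ?thesis .
  qed
  then show "\<exists>N. \<forall>m\<ge>N. cmod (\<Sum>i<m. u i * v i) \<le> sqrt A * sqrt B" by blast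
qed

lemma summable_mult_if_summable_squares:
  fixes u v :: "nat \<Rightarrow> complex"
  assumes "summable (\<lambda>i. (cmod (u i))^2)" "summable (\<lambda>i. (cmod (v i))^2)"
  shows "summable (\<lambda>i. u i * v i)"
proof (rule summable_norm_cancel, rule summable_comparison_test)
  show "summable (\<lambda>i. ((cmod (u i))^2 + (cmod (v i))^2) / 2)"
    using summable_add[OF assms] by (intro summable_divide)
  have "norm (u i * v i) \<le> ((cmod (u i))^2 + (cmod (v i))^2) / 2" for i
    using sum_squares_bound[of "cmod (u i)" "cmod (v i)"] by (simp add: norm_mult)
  then show "\<exists>N. \<forall>i\<ge>N. norm (norm (u i * v i)) \<le> ((cmod (u i))^2 + (cmod (v i))^2) / 2" by simp
qed

lemma le_square_if_le_mult_sqrt: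
  fixes M C :: real
  assumes "0 \<le> M" "0 \<le> C" "M \<le> C * sqrt M"
  shows "M \<le> C^2"
proof (cases "M = 0")
  case False
  then have "sqrt M * sqrt M \<le> C * sqrt M" "sqrt M > 0" using assms by simp_all
  then have "sqrt M \<le> C" using mult_right_le_imp_le by blast
  then have "(sqrt M)^2 \<le> C^2" using \<open>sqrt M > 0\<close> by (intro power_mono) auto
  then show ?thesis using assms(1) by simp
qed (use assms in simp)

lemma exists_pos_mult_sqrt_less:
  fixes C r :: real
  assumes "0 \<le> C" "0 < r"
  obtains \<epsilon> where "0 < \<epsilon>" "C * sqrt \<epsilon> < r"
proof
  show "0 < (r / (C + 1))^2" using assms by simp
  have "C * sqrt ((r / (C + 1))^2) = r * (C / (C + 1))" using assms by simp
  also have "\<dots> < r * 1" using assms by (intro mult_strict_left_mono) auto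
  finally show "C * sqrt ((r / (C + 1))^2) < r" by simp
qed

lemma dependent_choice_strict_mono:
  fixes P :: "nat \<Rightarrow> 'b \<Rightarrow> nat \<Rightarrow> bool"
  assumes step: "\<And>n. \<exists>t n'. n < n' \<and> P n t n'"
  obtains t m where "strict_mono m" "m 0 = n0" "\<And>k. P (m k) (t k) (m (Suc k))"
proof -
  have "\<exists>f. \<forall>n. n < snd (f n) \<and> P n (fst (f n)) (snd (f n))"
    using step by (intro choice) auto
  then obtain f where f: "\<And>n. n < snd (f n) \<and> P n (fst (f n)) (snd (f n))" by blast
  define next_t where "next_t n = fst (f n)" for n
  define next_n where "next_n n = snd (f n)" for n
  have nxt: "n < next_n n \<and> P n (next_t n) (next_n n)" for n
    using f by (simp add: next_t_def next_n_def)
  define m where "m k = (next_n ^^ k) n0" for k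
  have m_Suc: "m (Suc k) = next_n (m k)" for k by (simp add: m_def)
  show ?thesis
  proof
    show "strict_mono m" unfolding strict_mono_Suc_iff m_Suc using nxt by blast
    show "m 0 = n0" by (simp add: m_def)
    show "P (m k) (next_t (m k)) (m (Suc k))" for k using nxt by (simp add: m_Suc)
  qed
qed

definition block_union :: "(nat \<Rightarrow> nat) \<Rightarrow> nat set \<Rightarrow> nat set" where
  "block_union m S = (\<Union>j\<in>S. {m j..<m (Suc j)})"

context
  fixes f :: "nat \<Rightarrow> real"
  assumes summable: "summable f" and nonneg: "\<And>i. 0 \<le> f i"
begin

lemma summable_restrict: "summable (\<lambda>i. if i \<in> I then f i else 0)"
  by (rule summable_comparison_test[OF _ summable]) (auto simp: nonneg)

lemma sum_block_le_suminf_restrict: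
  assumes "k \<in> S"
  shows "(\<Sum>i\<in>{m k..<m (Suc k)}. f i) \<le> (\<Sum>i. if i \<in> block_union m S then f i else 0)"
proof -
  have "(\<Sum>i\<in>{m k..<m (Suc k)}. f i) = (\<Sum>i\<in>{m k..<m (Suc k)}. if i \<in> block_union m S then f i else 0)"
    using assms by (intro sum.cong) (auto simp: block_union_def)
  also have "\<dots> \<le> (\<Sum>i. if i \<in> block_union m S then f i else 0)"
    by (rule sum_le_suminf[OF summable_restrict]) (auto simp: nonneg)
  finally show ?thesis .
qed

lemma suminf_restrict_le_outside_block:
  assumes m: "strict_mono m" and "k \<notin> S"
  shows "(\<Sum>i. if i \<in> block_union m S then f i else 0)
    \<le> (\<Sum>i\<in>{m 0..<m k}. f i) + (\<Sum>i. f (i + m (Suc k)))"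
proof -
  have m_mono: "i \<le> j \<Longrightarrow> m i \<le> m j" for i j using m by (simp add: strict_mono_less_eq)
  define v1 where "v1 i = (if i \<in> {m 0..<m k} then f i else 0)" for i
  define v2 where "v2 i = f i - (if i \<in> {..<m (Suc k)} then f i else 0)" for i
  have le: "(if i \<in> block_union m S then f i else 0) \<le> v1 i + v2 i" for i
  proof (cases "i \<in> block_union m S")
    case True
    then obtain j where j: "j \<in> S" "m j \<le> i" "i < m (Suc j)" by (auto simp: block_union_def)
    moreover have "j \<noteq> k" using j(1) \<open>k \<notin> S\<close> by blast
    ultimately have "j < k \<or> Suc k \<le> j" by linarith
    then have "i \<in> {m 0..<m k} \<or> m (Suc k) \<le> i"
      using j m_mono[of 0 j] m_mono[of "Suc j" k] m_mono[of "Suc k" j] by auto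
    then show ?thesis using nonneg[of i] by (auto simp: v1_def v2_def)
  qed (auto simp: v1_def v2_def nonneg)
  have "v1 sums (\<Sum>i\<in>{m 0..<m k}. f i)"
    unfolding v1_def[abs_def] by (rule sums_If_finite_set) simp
  moreover have "v2 sums (\<Sum>i. f (i + m (Suc k)))"
    using sums_diff[OF summable_sums[OF summable] sums_If_finite_set[of "{..<m (Suc k)}" f]]
      suminf_split_initial_segment[OF summable, of "m (Suc k)"]
    by (simp add: v2_def[abs_def])
  ultimately have "(\<lambda>i. v1 i + v2 i) sums ((\<Sum>i\<in>{m 0..<m k}. f i) + (\<Sum>i. f (i + m (Suc k))))"
    by (rule sums_add)
  then show ?thesis
    using suminf_le[OF le summable_restrict] by (simp add: sums_iff)
qed

end

lemma CX_const [simp]: "(\<lambda>t. c) \<in> CX"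
  by (simp add: CX_def)

lemma CX_add: "f \<in> CX \<Longrightarrow> g \<in> CX \<Longrightarrow> (\<lambda>t. f t + g t) \<in> CX"
  by (auto simp: CX_def intro!: continuous_intros)

lemma CX_mult: "f \<in> CX \<Longrightarrow> g \<in> CX \<Longrightarrow> (\<lambda>t. f t * g t) \<in> CX"
  by (auto simp: CX_def intro!: continuous_intros)

lemma CX_cnj: "f \<in> CX \<Longrightarrow> (\<lambda>t. cnj (f t)) \<in> CX"
  by (auto simp: CX_def intro!: continuous_intros)

lemma norm_le_supnorm: "(\<And>t. norm (f t) \<le> B) \<Longrightarrow> norm (f t) \<le> supnorm f"
  unfolding supnorm_def by (rule cSUP_upper) (auto intro!: bdd_aboveI2[where M=B])

lemma supnorm_le: "(\<And>t. norm (f t) \<le> B) \<Longrightarrow> supnorm f \<le> B"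
  unfolding supnorm_def by (rule cSUP_least) auto

type_synonym 'a l2vec = "nat \<Rightarrow> 'a \<Rightarrow> complex"

definition sqnorm_upto :: "'a l2vec \<Rightarrow> nat \<Rightarrow> 'a \<Rightarrow> real" where
  "sqnorm_upto a n t = (\<Sum>i<n. (cmod (a i t))^2)"

definition sqnorm :: "'a l2vec \<Rightarrow> 'a \<Rightarrow> real" where
  "sqnorm a t = (\<Sum>i. (cmod (a i t))^2)"

lemma sqnorm_upto_nonneg: "0 \<le> sqnorm_upto a n t"
  by (simp add: sqnorm_upto_def sum_nonneg)

lemma sqnorm_upto_mono: "n \<le> m \<Longrightarrow> sqnorm_upto a n t \<le> sqnorm_upto a m t"
  unfolding sqnorm_upto_def by (rule sum_mono2) auto

lemma sqnorm_upto_diff: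
  "n \<le> m \<Longrightarrow> sqnorm_upto a m t - sqnorm_upto a n t = (\<Sum>i\<in>{n..<m}. (cmod (a i t))^2)"
  unfolding sqnorm_upto_def
  by (metis add_diff_cancel_left' atLeast0LessThan sum.atLeastLessThan_concat zero_le)

lemma continuous_sqnorm_upto: "(\<And>i. a i \<in> CX) \<Longrightarrow> continuous_on UNIV (sqnorm_upto a n)"
  unfolding sqnorm_upto_def[abs_def] by (auto simp: CX_def intro!: continuous_intros)

lemma sum_cnj_mult_self: "(\<Sum>i<n. cnj (a i t) * a i t) = complex_of_real (sqnorm_upto a n t)"
  by (simp add: sqnorm_upto_def cnj_mult_self)

lemma summable_if_sqnorm_upto_bounded:
  "(\<And>m. sqnorm_upto a m t \<le> B) \<Longrightarrow> summable (\<lambda>i. (cmod (a i t))^2)"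
  by (rule summableI_nonneg_bounded[where x=B]) (auto simp: sqnorm_upto_def)

lemma sum_ivl_le_if_sqnorm_upto_bounded:
  "(\<And>m. sqnorm_upto a m t \<le> B) \<Longrightarrow> (\<Sum>i\<in>{n..<m}. (cmod (a i t))^2) \<le> B"
  by (rule order_trans[of _ "sqnorm_upto a m t"]) (auto simp: sqnorm_upto_def intro!: sum_mono2)

lemma sqnorm_nonneg: "summable (\<lambda>i. (cmod (a i t))^2) \<Longrightarrow> 0 \<le> sqnorm a t"
  by (simp add: sqnorm_def suminf_nonneg)

lemma sqnorm_upto_le_sqnorm: "summable (\<lambda>i. (cmod (a i t))^2) \<Longrightarrow> sqnorm_upto a n t \<le> sqnorm a t"
  unfolding sqnorm_upto_def sqnorm_def by (rule sum_le_suminf) auto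

lemma sqnorm_upto_tendsto:
  "summable (\<lambda>i. (cmod (a i t))^2) \<Longrightarrow> (\<lambda>n. sqnorm_upto a n t) \<longlonglongrightarrow> sqnorm a t"
  unfolding sqnorm_upto_def sqnorm_def by (rule summable_LIMSEQ)

lemma sqnorm_minus_sqnorm_upto:
  "summable (\<lambda>i. (cmod (a i t))^2) \<Longrightarrow> sqnorm a t - sqnorm_upto a n t = (\<Sum>i. (cmod (a (i + n) t))^2)"
  unfolding sqnorm_upto_def sqnorm_def by (simp add: suminf_split_initial_segment[of _ n])

lemma sum_ivl_le_sqnorm_tail:
  assumes "summable (\<lambda>i. (cmod (a i t))^2)"
  shows "(\<Sum>i\<in>{n..<m}. (cmod (a i t))^2) \<le> sqnorm a t - sqnorm_upto a n t"
proof (cases "n \<le> m")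
  case True
  then show ?thesis
    using sqnorm_upto_diff[OF True, of a t] sqnorm_upto_le_sqnorm[of a t m, OF assms] by linarith
qed (simp add: sqnorm_upto_le_sqnorm[of a t n, OF assms])

lemma l2I:
  assumes "\<And>i. a i \<in> CX" "\<And>t. summable (\<lambda>i. (cmod (a i t))^2)"
    and "\<And>\<epsilon>. \<epsilon> > 0 \<Longrightarrow> \<exists>N. \<forall>n\<ge>N. \<forall>t. sqnorm a t - sqnorm_upto a n t < \<epsilon>"
  shows "a \<in> l2"
proof -
  have "uniform_limit UNIV (\<lambda>n t. \<Sum>i<n. cnj (a i t) * a i t) (\<lambda>t. complex_of_real (sqnorm a t)) sequentially"
    unfolding uniform_limit_iff eventually_sequentially
  proof (intro allI impI)
    fix \<epsilon> :: real assume "\<epsilon> > 0"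
    then obtain N where N: "\<And>n t. n \<ge> N \<Longrightarrow> sqnorm a t - sqnorm_upto a n t < \<epsilon>" using assms(3) by blast
    have "dist (\<Sum>i<n. cnj (a i t) * a i t) (complex_of_real (sqnorm a t)) = sqnorm a t - sqnorm_upto a n t" for n t
      using sqnorm_upto_le_sqnorm[of a t n, OF assms(2)]
      by (simp add: sum_cnj_mult_self dist_norm flip: of_real_diff)
    then show "\<exists>N. \<forall>n\<ge>N. \<forall>t\<in>UNIV. dist (\<Sum>i<n. cnj (a i t) * a i t) (complex_of_real (sqnorm a t)) < \<epsilon>"
      using N by (intro exI[of _ N]) auto
  qed
  then show ?thesis using assms(1) by (auto simp: l2_def uniformly_convergent_on_def)
qed

lemma l2_CX: "a \<in> l2 \<Longrightarrow> a i \<in> CX"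
  by (simp add: l2_def)

lemma l2D:
  fixes a :: "'a::topological_space l2vec"
  assumes "a \<in> l2"
  shows l2_summable: "summable (\<lambda>i. (cmod (a i t))^2)"
    and l2_inner_self: "l2_inner a a = (\<lambda>t. complex_of_real (sqnorm a t))"
    and continuous_sqnorm: "continuous_on UNIV (sqnorm a)"
    and l2_uniform_tail: "\<And>\<epsilon>. \<epsilon> > 0 \<Longrightarrow> \<exists>N. \<forall>n\<ge>N. \<forall>t. sqnorm a t - sqnorm_upto a n t < \<epsilon>"
proof -
  obtain l where ul: "uniform_limit UNIV (\<lambda>n t. \<Sum>i<n. cnj (a i t) * a i t) l sequentially"
    using assms by (auto simp: l2_def uniformly_convergent_on_def)
  have lim: "(\<lambda>n. complex_of_real (sqnorm_upto a n t)) \<longlonglongrightarrow> l t" for t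
    using tendsto_uniform_limitI[OF ul, of t] by (simp add: sum_cnj_mult_self)
  have sums: "(\<lambda>i. (cmod (a i t))^2) sums Re (l t)" for t
    using tendsto_Re[OF lim[of t]] by (simp add: sums_def sqnorm_upto_def)
  then show summable: "summable (\<lambda>i. (cmod (a i t))^2)" for t
    by (auto simp: sums_iff)
  have l_eq: "l t = complex_of_real (sqnorm a t)" for t
  proof -
    have "Im (l t) = 0"
      using tendsto_Im[OF lim[of t]] by (simp add: LIMSEQ_const_iff)
    then show ?thesis using sums[of t] by (simp add: sqnorm_def sums_iff complex_eq_iff)
  qed
  show "l2_inner a a = (\<lambda>t. complex_of_real (sqnorm a t))"
  proof
    fix t
    have "(\<lambda>i. cnj (a i t) * a i t) sums complex_of_real (sqnorm a t)"
      unfolding cnj_mult_self sqnorm_def using sums_of_real[OF summable_sums[OF summable]] .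
    then show "l2_inner a a t = complex_of_real (sqnorm a t)"
      by (simp add: l2_inner_def sums_iff)
  qed
  have "continuous_on UNIV l"
    by (rule uniform_limit_theorem[OF _ ul])
      (use assms in \<open>auto simp: l2_def CX_def intro!: always_eventually continuous_intros\<close>)
  then show "continuous_on UNIV (sqnorm a)"
    using continuous_on_Re[of UNIV l] by (simp add: l_eq)
  fix \<epsilon> :: real assume "\<epsilon> > 0"
  then have "\<forall>\<^sub>F n in sequentially. \<forall>t\<in>UNIV. dist (\<Sum>i<n. cnj (a i t) * a i t) (l t) < \<epsilon>"
    using ul by (simp add: uniform_limit_iff)
  then obtain N where N: "\<And>n t. n \<ge> N \<Longrightarrow> dist (\<Sum>i<n. cnj (a i t) * a i t) (l t) < \<epsilon>"
    by (auto simp: eventually_sequentially)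
  show "\<exists>N. \<forall>n\<ge>N. \<forall>t. sqnorm a t - sqnorm_upto a n t < \<epsilon>"
  proof (intro exI[of _ N] allI impI)
    fix n t assume "N \<le> n"
    have "dist (\<Sum>i<n. cnj (a i t) * a i t) (l t) = \<bar>sqnorm_upto a n t - sqnorm a t\<bar>"
      by (simp add: sum_cnj_mult_self l_eq dist_norm flip: of_real_diff)
    then show "sqnorm a t - sqnorm_upto a n t < \<epsilon>" using N[OF \<open>N \<le> n\<close>, of t] by linarith
  qed
qed

lemma l2_sqnorm_nonneg: "a \<in> l2 \<Longrightarrow> 0 \<le> sqnorm a t"
  by (rule sqnorm_nonneg, rule l2_summable)

type_synonym 'a l2functional = "'a l2vec \<Rightarrow> 'a \<Rightarrow> complex"

definition l2_unit :: "nat \<Rightarrow> 'a l2vec" where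
  "l2_unit i = (\<lambda>j t. if j = i then 1 else 0)"

definition l2_head :: "nat \<Rightarrow> 'a l2vec \<Rightarrow> 'a l2vec" where
  "l2_head n a = (\<lambda>i t. if i < n then a i t else 0)"

definition l2_tail :: "nat \<Rightarrow> 'a l2vec \<Rightarrow> 'a l2vec" where
  "l2_tail n a = (\<lambda>i t. if i < n then 0 else a i t)"

definition dual_coef :: "'a l2functional \<Rightarrow> 'a l2vec" where
  "dual_coef \<tau> i = \<tau> (l2_unit i)"

lemma l2_finite_support:
  assumes "\<And>i. b i \<in> CX" "\<And>i t. i \<ge> N \<Longrightarrow> b i t = 0"
  shows "b \<in> l2"
proof (rule l2I[OF assms(1)])
  show "summable (\<lambda>i. (cmod (b i t))^2)" for t
    by (rule summable_finite[of "{..<N}"]) (use assms(2) in auto)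
  have "sqnorm b t = sqnorm_upto b n t" if "n \<ge> N" for n t
    unfolding sqnorm_def sqnorm_upto_def by (rule suminf_finite) (use assms(2) that in auto)
  then show "\<exists>N. \<forall>n\<ge>N. \<forall>t. sqnorm b t - sqnorm_upto b n t < \<epsilon>" if "\<epsilon> > 0" for \<epsilon>
    using that by (intro exI[of _ N]) simp
qed

lemma l2_dominated:
  assumes a: "a \<in> l2" and "\<And>i. b i \<in> CX" and dom: "\<And>i t. cmod (b i t) \<le> cmod (a i t)"
  shows "b \<in> l2"
proof -
  have le: "(cmod (b i t))^2 \<le> (cmod (a i t))^2" for i t
    using dom[of i t] by (simp add: power_mono)
  have sa: "summable (\<lambda>i. (cmod (a i t))^2)" for t by (rule l2_summable[OF a])
  have sb: "summable (\<lambda>i. (cmod (b i t))^2)" for t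
    by (rule summable_comparison_test[OF _ sa]) (use le in auto)
  have "sqnorm b t - sqnorm_upto b n t \<le> sqnorm a t - sqnorm_upto a n t" for n t
    unfolding sqnorm_minus_sqnorm_upto[of b t n, OF sb] sqnorm_minus_sqnorm_upto[of a t n, OF sa]
    using summable_iff_shift[of "\<lambda>i. (cmod (a i t))^2" n] summable_iff_shift[of "\<lambda>i. (cmod (b i t))^2" n]
    by (intro suminf_le) (use le sa sb in auto)
  then show ?thesis
    using l2_uniform_tail[OF a] by (intro l2I[OF assms(2) sb]) (meson order_le_less_trans)
qed

lemma l2_unit_l2: "l2_unit i \<in> l2"
  by (rule l2_finite_support[where N="Suc i"]) (auto simp: l2_unit_def)

lemma l2_scale_unit_l2: "f \<in> CX \<Longrightarrow> l2_scale (l2_unit n) f \<in> l2"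
  by (rule l2_finite_support[where N="Suc n"]) (auto simp: l2_scale_def l2_unit_def)

lemma l2_head_l2:
  assumes "a \<in> l2"
  shows "l2_head n a \<in> l2"
proof (rule l2_finite_support[where N=n])
  show "l2_head n a i \<in> CX" for i
    using l2_CX[OF assms, of i] by (cases "i < n") (auto simp: l2_head_def)
qed (auto simp: l2_head_def)

lemma l2_tail_l2:
  assumes "a \<in> l2"
  shows "l2_tail n a \<in> l2"
proof (rule l2_dominated[OF assms])
  show "l2_tail n a i \<in> CX" for i
    using l2_CX[OF assms, of i] by (cases "i < n") (auto simp: l2_tail_def)
qed (auto simp: l2_tail_def)

lemma l2_add_head_tail: "l2_add (l2_head n a) (l2_tail n a) = a"
  by (auto simp: l2_add_def l2_head_def l2_tail_def fun_eq_iff)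

lemma l2_head_0: "l2_head 0 a = l2_scale a (\<lambda>t. 0)"
  by (auto simp: l2_head_def l2_scale_def fun_eq_iff)

lemma l2_head_Suc: "l2_head (Suc n) a = l2_add (l2_head n a) (l2_scale (l2_unit n) (a n))"
  by (auto simp: l2_add_def l2_head_def l2_scale_def l2_unit_def fun_eq_iff)

lemma sqnorm_l2_tail:
  assumes "summable (\<lambda>i. (cmod (a i t))^2)"
  shows "sqnorm (l2_tail n a) t = sqnorm a t - sqnorm_upto a n t"
proof -
  have "(\<lambda>i. (cmod (a i t))^2) = (\<lambda>i. (cmod (l2_head n a i t))^2 + (cmod (l2_tail n a i t))^2)"
    by (auto simp: l2_head_def l2_tail_def fun_eq_iff)
  moreover have s1: "summable (\<lambda>i. (cmod (l2_head n a i t))^2)"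
    by (rule summable_finite[of "{..<n}"]) (auto simp: l2_head_def)
  moreover have s2: "summable (\<lambda>i. (cmod (l2_tail n a i t))^2)"
    by (rule summable_comparison_test[OF _ assms]) (auto simp: l2_tail_def)
  moreover have "(\<Sum>i. (cmod (l2_head n a i t))^2) = sqnorm_upto a n t"
    unfolding sqnorm_upto_def by (subst suminf_finite[of "{..<n}"]) (auto simp: l2_head_def)
  ultimately show ?thesis unfolding sqnorm_def using suminf_add[OF s1 s2] by simp
qed

lemma dual1_CX: "\<tau> \<in> dual1 \<Longrightarrow> a \<in> l2 \<Longrightarrow> \<tau> a \<in> CX"
  by (simp add: dual1_def)

lemma dual1_add: "\<tau> \<in> dual1 \<Longrightarrow> a \<in> l2 \<Longrightarrow> b \<in> l2 \<Longrightarrow> \<tau> (l2_add a b) = (\<lambda>t. \<tau> a t + \<tau> b t)"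
  by (simp add: dual1_def)

lemma dual1_scale: "\<tau> \<in> dual1 \<Longrightarrow> a \<in> l2 \<Longrightarrow> f \<in> CX \<Longrightarrow> \<tau> (l2_scale a f) = (\<lambda>t. \<tau> a t * f t)"
  by (simp add: dual1_def)

lemma dual_coef_CX: "\<tau> \<in> dual1 \<Longrightarrow> dual_coef \<tau> i \<in> CX"
  unfolding dual_coef_def by (rule dual1_CX[OF _ l2_unit_l2])

lemma dual1_l2_head:
  assumes \<tau>: "\<tau> \<in> dual1" and a: "a \<in> l2"
  shows "\<tau> (l2_head n a) = (\<lambda>t. \<Sum>i<n. dual_coef \<tau> i t * a i t)"
proof (induction n)
  case 0
  then show ?case using dual1_scale[OF \<tau> a, of "\<lambda>t. 0"] by (simp add: l2_head_0)
next
  case (Suc n)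
  have "\<tau> (l2_head (Suc n) a) = (\<lambda>t. \<tau> (l2_head n a) t + \<tau> (l2_scale (l2_unit n) (a n)) t)"
    unfolding l2_head_Suc using l2_head_l2[OF a] l2_scale_unit_l2[OF l2_CX[OF a]] by (rule dual1_add[OF \<tau>])
  also have "\<tau> (l2_scale (l2_unit n) (a n)) = (\<lambda>t. dual_coef \<tau> n t * a n t)"
    unfolding dual_coef_def by (rule dual1_scale[OF \<tau> l2_unit_l2 l2_CX[OF a]])
  finally show ?case using Suc by simp
qed

lemma dual1_eq_head_plus_tail:
  assumes \<tau>: "\<tau> \<in> dual1" and a: "a \<in> l2"
  shows "\<tau> a t = (\<Sum>i<n. dual_coef \<tau> i t * a i t) + \<tau> (l2_tail n a) t"
proof -
  have "\<tau> (l2_add (l2_head n a) (l2_tail n a)) = (\<lambda>t. \<tau> (l2_head n a) t + \<tau> (l2_tail n a) t)"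
    by (rule dual1_add[OF \<tau> l2_head_l2[OF a] l2_tail_l2[OF a]])
  then show ?thesis by (simp add: l2_add_head_tail dual1_l2_head[OF \<tau> a])
qed

definition coef_functional :: "'a l2vec \<Rightarrow> 'a l2functional" where
  "coef_functional g a t = (\<Sum>i. g i t * a i t)"

lemma dual_coef_coef_functional: "dual_coef (coef_functional g) = g"
proof (intro ext)
  fix i t
  have "(\<lambda>j. g j t * l2_unit i j t) = (\<lambda>j. if j = i then g j t else 0)"
    by (auto simp: l2_unit_def)
  then show "dual_coef (coef_functional g) i t = g i t"
    using sums_single[of i "\<lambda>j. g j t"] by (simp add: dual_coef_def coef_functional_def sums_iff)
qed

context
  fixes g :: "'a::topological_space l2vec" and B :: real
  assumes g_bounded: "\<And>m t. sqnorm_upto g m t \<le> B"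
begin

lemma coef_functional_sums: "a \<in> l2 \<Longrightarrow> (\<lambda>i. g i t * a i t) sums coef_functional g a t"
  unfolding coef_functional_def
  by (intro summable_sums summable_mult_if_summable_squares l2_summable
      summable_if_sqnorm_upto_bounded[of g t B] g_bounded)

lemma coef_functional_minus_sum_le:
  assumes a: "a \<in> l2"
  shows "cmod (coef_functional g a t - (\<Sum>i<n. g i t * a i t)) \<le> sqrt B * sqrt (sqnorm a t - sqnorm_upto a n t)"
proof (rule cmod_sums_mult_le[where u="\<lambda>i. g (i + n) t" and v="\<lambda>i. a (i + n) t"])
  show "(\<lambda>i. g (i + n) t * a (i + n) t) sums (coef_functional g a t - (\<Sum>i<n. g i t * a i t))"
    using sums_split_initial_segment[OF coef_functional_sums[OF a], of n] by simp
  show "(\<Sum>i<m. (cmod (g (i + n) t))^2) \<le> B" for m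
    using sum_ivl_le_if_sqnorm_upto_bounded[of g t B n "m + n", OF g_bounded]
      sum.shift_bounds_nat_ivl[of "\<lambda>i. (cmod (g i t))^2" 0 n m]
    by (simp add: atLeast0LessThan)
  have "summable (\<lambda>i. (cmod (a (i + n) t))^2)"
    using summable_iff_shift[of "\<lambda>i. (cmod (a i t))^2" n] l2_summable[OF a] by simp
  then show "(\<Sum>i<m. (cmod (a (i + n) t))^2) \<le> sqnorm a t - sqnorm_upto a n t" for m
    unfolding sqnorm_minus_sqnorm_upto[of a t n, OF l2_summable[OF a]]
    by (rule sum_le_suminf) auto
qed

lemma coef_functional_CX:
  assumes g: "\<And>i. g i \<in> CX" and a: "a \<in> l2"
  shows "coef_functional g a \<in> CX"
proof -
  have B: "B \<ge> 0" using g_bounded[of 0] by (simp add: sqnorm_upto_def)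
  have lim: "uniform_limit UNIV (\<lambda>n t. \<Sum>i<n. g i t * a i t) (coef_functional g a) sequentially"
    unfolding uniform_limit_iff eventually_sequentially
  proof (intro allI impI)
    fix r :: real assume "r > 0"
    then obtain \<epsilon> where "\<epsilon> > 0" "sqrt B * sqrt \<epsilon> < r"
      using exists_pos_mult_sqrt_less[of "sqrt B" r] B by auto
    then obtain N where N: "\<And>n t. n \<ge> N \<Longrightarrow> sqnorm a t - sqnorm_upto a n t < \<epsilon>"
      using l2_uniform_tail[OF a] by blast
    have "dist (\<Sum>i<n. g i t * a i t) (coef_functional g a t) < r" if "n \<ge> N" for n t
    proof -
      have "dist (\<Sum>i<n. g i t * a i t) (coef_functional g a t) \<le> sqrt B * sqrt (sqnorm a t - sqnorm_upto a n t)"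
        using coef_functional_minus_sum_le[OF a] by (simp add: dist_norm norm_minus_commute)
      also have "\<dots> \<le> sqrt B * sqrt \<epsilon>"
        using N[OF that, of t] B by (intro mult_left_mono real_sqrt_le_mono) auto
      finally show ?thesis using \<open>sqrt B * sqrt \<epsilon> < r\<close> by simp
    qed
    then show "\<exists>N. \<forall>n\<ge>N. \<forall>t\<in>UNIV. dist (\<Sum>i<n. g i t * a i t) (coef_functional g a t) < r" by blast
  qed
  have "\<forall>\<^sub>F n in sequentially. continuous_on UNIV (\<lambda>t. \<Sum>i<n. g i t * a i t)"
    using g l2_CX[OF a] by (intro always_eventually allI) (auto simp: CX_def intro!: continuous_intros)
  from uniform_limit_theorem[OF this lim] show ?thesis by (simp add: CX_def)
qed

lemma coef_functional_add:
  "a \<in> l2 \<Longrightarrow> b \<in> l2 \<Longrightarrow>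
    coef_functional g (l2_add a b) = (\<lambda>t. coef_functional g a t + coef_functional g b t)"
  using sums_add[OF coef_functional_sums coef_functional_sums]
  by (auto simp: coef_functional_def l2_add_def distrib_left sums_iff fun_eq_iff)

lemma coef_functional_scale:
  "a \<in> l2 \<Longrightarrow> coef_functional g (l2_scale a f) = (\<lambda>t. coef_functional g a t * f t)"
  using sums_mult2[OF coef_functional_sums]
  by (auto simp: coef_functional_def l2_scale_def mult.assoc sums_iff fun_eq_iff)

end

definition coef_functional_upto :: "nat \<Rightarrow> 'a l2vec \<Rightarrow> 'a l2functional" where
  "coef_functional_upto n g a t = (\<Sum>i<n. g i t * a i t)"

definition coord :: "nat \<Rightarrow> 'a l2functional" where
  "coord i a = a i"

lemma coef_functional_upto_0: "coef_functional_upto 0 g = (\<lambda>a t. 0)"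
  by (simp add: coef_functional_upto_def fun_eq_iff)

lemma coef_functional_upto_Suc:
  "coef_functional_upto (Suc n) g
    = dual_add (coef_functional_upto n g) (dual_scale (coord n) (\<lambda>t. cnj (g n t)))"
  by (simp add: coef_functional_upto_def dual_add_def dual_scale_def coord_def fun_eq_iff)

lemma zero_l2: "(\<lambda>i t. 0) \<in> l2"
  by (rule l2_finite_support[where N=0]) auto

lemma l2_norm_zero [simp]: "l2_norm (\<lambda>i t. 0) = 0"
  by (simp add: l2_norm_def l2_inner_def supnorm_def)

lemma supnorm_zero [simp]: "supnorm (\<lambda>t. 0 :: complex) = 0"
  by (simp add: supnorm_def)

lemma zero_dual1: "(\<lambda>a t. 0) \<in> dual1"
  unfolding dual1_def by (intro CollectI conjI exI[of _ 0]) auto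

lemma dual_norm_le:
  fixes \<tau> :: "'a::topological_space l2functional"
  assumes "\<And>a t. a \<in> l2 \<Longrightarrow> l2_norm a \<le> 1 \<Longrightarrow> cmod (\<tau> a t) \<le> M"
  shows "dual_norm \<tau> \<le> M"
  unfolding dual_norm_def
proof (rule cSup_least)
  show "{supnorm (\<tau> a) |a. a \<in> l2 \<and> l2_norm a \<le> 1} \<noteq> {}"
  proof -
    have "supnorm (\<tau> (\<lambda>i t. 0)) \<in> {supnorm (\<tau> a) |a. a \<in> l2 \<and> l2_norm a \<le> 1}"
      by (intro CollectI exI[of _ "\<lambda>i t. 0"]) (simp add: zero_l2)
    then show ?thesis by blast
  qed
  fix x assume "x \<in> {supnorm (\<tau> a) |a. a \<in> l2 \<and> l2_norm a \<le> 1}"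
  then obtain a where "a \<in> l2" "l2_norm a \<le> 1" "x = supnorm (\<tau> a)" by blast
  then show "x \<le> M" using assms by (simp add: supnorm_le)
qed

lemma dual2_CX: "F \<in> dual2 \<Longrightarrow> \<tau> \<in> dual1 \<Longrightarrow> F \<tau> \<in> CX"
  by (simp add: dual2_def)

lemma dual2_add: "F \<in> dual2 \<Longrightarrow> \<tau> \<in> dual1 \<Longrightarrow> \<sigma> \<in> dual1 \<Longrightarrow> F (dual_add \<tau> \<sigma>) = (\<lambda>t. F \<tau> t + F \<sigma> t)"
  by (simp add: dual2_def)

lemma dual2_scale: "F \<in> dual2 \<Longrightarrow> \<tau> \<in> dual1 \<Longrightarrow> f \<in> CX \<Longrightarrow> F (dual_scale \<tau> f) = (\<lambda>t. F \<tau> t * f t)"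
  by (simp add: dual2_def)

lemma dual2_zero:
  assumes "F \<in> dual2"
  shows "F (\<lambda>a t. 0) = (\<lambda>t. 0)"
proof
  fix t
  have "F (\<lambda>a t. 0) t = F (dual_add (\<lambda>a t. 0) (\<lambda>a t. 0)) t"
    by (simp add: dual_add_def)
  also have "\<dots> = F (\<lambda>a t. 0) t + F (\<lambda>a t. 0) t"
    by (simp add: dual2_add[OF assms zero_dual1 zero_dual1])
  finally show "F (\<lambda>a t. 0) t = 0" by (simp only: add_cancel_right_right)
qed

definition dual2_vec :: "('a l2functional \<Rightarrow> 'a \<Rightarrow> complex) \<Rightarrow> 'a l2vec" where
  "dual2_vec F i t = cnj (F (coord i) t)"

definition small_tails_at :: "'a::topological_space l2vec \<Rightarrow> 'a \<Rightarrow> bool" where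
  "small_tails_at g t0 \<longleftrightarrow>
     (\<forall>\<epsilon>>0. \<exists>n W. open W \<and> t0 \<in> W \<and> (\<forall>t\<in>W. \<forall>m. (\<Sum>i\<in>{n..<m}. (cmod (g i t))^2) \<le> \<epsilon>))"

lemma small_tails_at_mono:
  assumes "\<And>i t. cmod (h i t) \<le> cmod (g i t)" "small_tails_at g t0"
  shows "small_tails_at h t0"
  unfolding small_tails_at_def
proof (intro allI impI)
  fix \<epsilon> :: real assume "\<epsilon> > 0"
  then obtain n W where W: "open W" "t0 \<in> W" "\<And>t m. t \<in> W \<Longrightarrow> (\<Sum>i\<in>{n..<m}. (cmod (g i t))^2) \<le> \<epsilon>"
    using assms(2) unfolding small_tails_at_def by meson
  have "(\<Sum>i\<in>{n..<m}. (cmod (h i t))^2) \<le> (\<Sum>i\<in>{n..<m}. (cmod (g i t))^2)" for t m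
    by (intro sum_mono power_mono assms(1)) auto
  then show "\<exists>n W. open W \<and> t0 \<in> W \<and> (\<forall>t\<in>W. \<forall>m. (\<Sum>i\<in>{n..<m}. (cmod (h i t))^2) \<le> \<epsilon>)"
    using W by (meson order_trans)
qed

lemma ultrafilters_nat_Inter:
  assumes "U \<in> ultrafilters_nat" "finite V" "V \<subseteq> U"
  shows "\<Inter>V \<in> U"
  using assms(2,3)
proof (induction V rule: finite_induct)
  case empty
  then show ?case using assms(1) by (simp add: ultrafilters_nat_def)
next
  case (insert A V)
  then show ?case using assms(1) by (simp add: ultrafilters_nat_def)
qed

lemma topspace_betaN: "topspace betaN = ultrafilters_nat"
  unfolding betaN_def topology_generated_by_topspace by (auto simp: ultrafilters_nat_def)

definition accumulation_sets :: "(nat \<Rightarrow> 'a::topological_space) \<Rightarrow> 'a \<Rightarrow> nat set set" where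
  "accumulation_sets s q = {S. q \<in> closure (s ` S)}"

lemma Hausdorff_space_t2_euclidean: "Hausdorff_space (euclidean :: 'a::t2_space topology)"
  unfolding Hausdorff_space_def by (metis disjnt_def hausdorff open_openin)

context
  assumes compact_UNIV: "compact (UNIV :: 'a::t2_space set)"
begin

lemma compact_space_euclidean: "compact_space (euclidean :: 'a topology)"
  using compact_UNIV by (simp add: compact_space_def)

lemma regular_space_euclidean_compact: "regular_space (euclidean :: 'a topology)"
  using compact_Hausdorff_imp_regular_space compact_space_euclidean Hausdorff_space_t2_euclidean by blast

lemma locally_compact_regular_euclidean:
  "locally_compact_space (euclidean :: 'a topology) \<and> regular_space (euclidean :: 'a topology)"
  using compact_imp_locally_compact_space[OF compact_space_euclidean] regular_space_euclidean_compact
  by blast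

lemma continuous_bounded:
  fixes f :: "'a \<Rightarrow> 'b::real_normed_vector"
  assumes "continuous_on UNIV f"
  shows "\<exists>B. \<forall>t. norm (f t) \<le> B"
  using compact_imp_bounded[OF compact_continuous_image[OF assms compact_UNIV]]
  by (auto simp: bounded_iff)

lemma CX_norm_le_supnorm:
  fixes f :: "'a \<Rightarrow> complex"
  assumes "f \<in> CX"
  shows "norm (f t) \<le> supnorm f"
proof -
  obtain B where "\<And>t. norm (f t) \<le> B"
    using assms continuous_bounded[of f] by (auto simp: CX_def)
  then show ?thesis by (rule norm_le_supnorm)
qed

lemma CX_supnorm_nonneg: "(f :: 'a \<Rightarrow> complex) \<in> CX \<Longrightarrow> 0 \<le> supnorm f"
  using CX_norm_le_supnorm norm_ge_zero order_trans by blast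

lemma continuous_le_SUP:
  fixes f :: "'a \<Rightarrow> real"
  assumes "continuous_on UNIV f"
  shows "f t \<le> (SUP t. f t)"
proof -
  obtain B where "\<And>t. norm (f t) \<le> B" using continuous_bounded[OF assms] by blast
  then show ?thesis by (intro cSUP_upper) (auto intro!: bdd_aboveI2[where M=B] simp: abs_le_iff)
qed

context
  fixes a :: "'a l2vec"
  assumes a: "a \<in> l2"
begin

lemma l2_norm_eq_sqrt_SUP: "l2_norm a = sqrt (SUP t. sqnorm a t)"
proof -
  have "(\<lambda>t. norm (complex_of_real (sqnorm a t))) = sqnorm a"
    using l2_sqnorm_nonneg[OF a] by (auto simp: fun_eq_iff)
  then show ?thesis unfolding l2_norm_def supnorm_def l2_inner_self[OF a] by (simp only:)
qed

lemma sqnorm_le_SUP: "sqnorm a t \<le> (SUP t. sqnorm a t)"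
  by (rule continuous_le_SUP[OF continuous_sqnorm[OF a]])

lemma sqnorm_le_l2_norm: "sqnorm a t \<le> (l2_norm a)^2"
  using sqnorm_le_SUP[of t] order_trans[OF l2_sqnorm_nonneg[OF a] sqnorm_le_SUP]
  by (simp add: l2_norm_eq_sqrt_SUP)

lemma l2_norm_nonneg: "0 \<le> l2_norm a"
  using order_trans[OF l2_sqnorm_nonneg[OF a] sqnorm_le_SUP] by (simp add: l2_norm_eq_sqrt_SUP)

lemma l2_norm_le: "(\<And>t. sqnorm a t \<le> B) \<Longrightarrow> l2_norm a \<le> sqrt B"
  unfolding l2_norm_eq_sqrt_SUP by (rule real_sqrt_le_mono, rule cSUP_least) auto

lemma sqnorm_upto_le_l2_norm: "sqnorm_upto a m t \<le> (l2_norm a)^2"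
  using sqnorm_upto_le_sqnorm[of a t m, OF l2_summable[OF a]] sqnorm_le_l2_norm[of t] by linarith

lemma norm_le_l2_norm: "cmod (a i t) \<le> l2_norm a"
proof -
  have "(cmod (a i t))^2 \<le> sqnorm_upto a (Suc i) t"
    unfolding sqnorm_upto_def by (rule member_le_sum) auto
  also have "\<dots> \<le> (l2_norm a)^2" by (rule sqnorm_upto_le_l2_norm)
  finally show ?thesis using l2_norm_nonneg by (rule power2_le_imp_le)
qed

end

lemma l2_tail_small:
  fixes a :: "'a l2vec"
  assumes a: "a \<in> l2" and "\<epsilon> > 0"
  obtains N where "\<And>n. n \<ge> N \<Longrightarrow> l2_norm (l2_tail n a) \<le> sqrt \<epsilon>"
proof -
  obtain N where N: "\<And>n t. n \<ge> N \<Longrightarrow> sqnorm a t - sqnorm_upto a n t < \<epsilon>"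
    using l2_uniform_tail[OF a \<open>\<epsilon> > 0\<close>] by blast
  have "l2_norm (l2_tail n a) \<le> sqrt \<epsilon>" if "n \<ge> N" for n
    using N[OF that] sqnorm_l2_tail[of a _ n, OF l2_summable[OF a]]
    by (intro l2_norm_le[OF l2_tail_l2[OF a]]) (simp add: less_imp_le)
  then show ?thesis using that by blast
qed

lemma dual1_bound:
  fixes \<tau> :: "'a l2functional"
  assumes "\<tau> \<in> dual1"
  obtains C where "C \<ge> 0" "\<And>a t. a \<in> l2 \<Longrightarrow> cmod (\<tau> a t) \<le> C * l2_norm a"
proof -
  obtain C where C: "\<And>a. a \<in> l2 \<Longrightarrow> supnorm (\<tau> a) \<le> C * l2_norm a"
    using assms unfolding dual1_def by blast
  have "cmod (\<tau> a t) \<le> max C 0 * l2_norm a" if "a \<in> l2" for a t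
    using CX_norm_le_supnorm[OF dual1_CX[OF assms that], of t] C[OF that]
      mult_right_mono[OF max.cobounded1 l2_norm_nonneg[OF that], of C 0] by linarith
  then show ?thesis using that[of "max C 0"] by simp
qed

lemma dual1_sums:
  fixes \<tau> :: "'a l2functional"
  assumes \<tau>: "\<tau> \<in> dual1" and a: "a \<in> l2"
  shows "(\<lambda>i. dual_coef \<tau> i t * a i t) sums \<tau> a t"
  unfolding sums_def LIMSEQ_iff
proof (intro allI impI)
  fix r :: real assume "r > 0"
  obtain C where "C \<ge> 0" and C: "\<And>a t. a \<in> l2 \<Longrightarrow> cmod (\<tau> a t) \<le> C * l2_norm a"
    using dual1_bound[OF \<tau>] by blast
  then obtain \<epsilon> where "\<epsilon> > 0" "C * sqrt \<epsilon> < r"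
    using exists_pos_mult_sqrt_less \<open>r > 0\<close> by blast
  obtain N where N: "\<And>n. n \<ge> N \<Longrightarrow> l2_norm (l2_tail n a) \<le> sqrt \<epsilon>"
    using l2_tail_small[OF a \<open>\<epsilon> > 0\<close>] by blast
  have "cmod ((\<Sum>i<n. dual_coef \<tau> i t * a i t) - \<tau> a t) < r" if "n \<ge> N" for n
  proof -
    have "cmod ((\<Sum>i<n. dual_coef \<tau> i t * a i t) - \<tau> a t) = cmod (\<tau> (l2_tail n a) t)"
      using dual1_eq_head_plus_tail[OF \<tau> a, of t n] by (simp add: norm_minus_commute)
    also have "\<dots> \<le> C * l2_norm (l2_tail n a)" by (rule C[OF l2_tail_l2[OF a]])
    also have "\<dots> \<le> C * sqrt \<epsilon>" using N[OF that] \<open>C \<ge> 0\<close> by (rule mult_left_mono)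
    finally show ?thesis using \<open>C * sqrt \<epsilon> < r\<close> by simp
  qed
  then show "\<exists>N. \<forall>n\<ge>N. cmod ((\<Sum>i<n. dual_coef \<tau> i t * a i t) - \<tau> a t) < r" by blast
qed

text \<open>This turns norm bounds on functionals into bounds on their coefficient sequences.\<close>

lemma le_square_if_le_mult_sqrt_SUP:
  fixes f :: "'a \<Rightarrow> real"
  assumes "continuous_on UNIV f" "\<And>t. 0 \<le> f t" "C \<ge> 0" "\<And>t. f t \<le> C * sqrt (SUP t. f t)"
  shows "f t \<le> C^2"
proof -
  have le: "f t \<le> (SUP t. f t)" for t by (rule continuous_le_SUP[OF assms(1)])
  have "(SUP t. f t) \<le> C * sqrt (SUP t. f t)" by (rule cSUP_least) (use assms(4) in auto)
  then have "(SUP t. f t) \<le> C^2"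
    using le_square_if_le_mult_sqrt order_trans[OF assms(2) le] assms(3) by blast
  then show ?thesis using le[of t] by linarith
qed

lemma dual_coef_bounded:
  fixes \<tau> :: "'a l2functional"
  assumes \<tau>: "\<tau> \<in> dual1"
  obtains B where "\<And>m t. sqnorm_upto (dual_coef \<tau>) m t \<le> B"
proof -
  obtain C where "C \<ge> 0" and C: "\<And>a t. a \<in> l2 \<Longrightarrow> cmod (\<tau> a t) \<le> C * l2_norm a"
    using dual1_bound[OF \<tau>] by blast
  have "sqnorm_upto (dual_coef \<tau>) m t \<le> C^2" for m t
  proof (rule le_square_if_le_mult_sqrt_SUP[OF _ sqnorm_upto_nonneg \<open>C \<ge> 0\<close>])
    show "continuous_on UNIV (sqnorm_upto (dual_coef \<tau>) m)"
      by (rule continuous_sqnorm_upto, rule dual_coef_CX[OF \<tau>])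
    \<comment> \<open>test the functional on the truncated conjugate of its own coefficient sequence\<close>
    define b where "b = l2_head m (\<lambda>i t. cnj (dual_coef \<tau> i t))"
    have "b i \<in> CX" for i
      using CX_cnj[OF dual_coef_CX[OF \<tau>, of i]] by (cases "i < m") (auto simp: b_def l2_head_def)
    then have b: "b \<in> l2"
      by (rule l2_finite_support[where N=m]) (simp add: b_def l2_head_def)
    have "sqnorm b t = sqnorm_upto (dual_coef \<tau>) m t" for t
      unfolding sqnorm_def sqnorm_upto_def by (subst suminf_finite[of "{..<m}"]) (auto simp: b_def l2_head_def)
    then have norm_b: "l2_norm b = sqrt (SUP t. sqnorm_upto (dual_coef \<tau>) m t)"
      by (simp add: l2_norm_eq_sqrt_SUP[OF b])
    fix t
    have "l2_head m b = b" by (simp add: b_def l2_head_def fun_eq_iff)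
    then have "\<tau> b t = (\<Sum>i<m. dual_coef \<tau> i t * b i t)"
      using fun_cong[OF dual1_l2_head[OF \<tau> b, of m], of t] by simp
    also have "\<dots> = complex_of_real (sqnorm_upto (dual_coef \<tau>) m t)"
      by (simp add: b_def l2_head_def sqnorm_upto_def complex_norm_square del: of_real_power)
    finally have "sqnorm_upto (dual_coef \<tau>) m t = cmod (\<tau> b t)"
      by (simp add: sqnorm_upto_nonneg)
    also have "\<dots> \<le> C * l2_norm b" by (rule C[OF b])
    finally show "sqnorm_upto (dual_coef \<tau>) m t \<le> C * sqrt (SUP t. sqnorm_upto (dual_coef \<tau>) m t)"
      by (simp add: norm_b)
  qed
  then show ?thesis using that by blast
qed

lemma coef_functional_dual1:
  fixes g :: "'a l2vec"
  assumes g: "\<And>i. g i \<in> CX" and g_bounded: "\<And>m t. sqnorm_upto g m t \<le> B"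
  shows "coef_functional g \<in> dual1"
proof -
  have B: "B \<ge> 0" using g_bounded[of 0] by (simp add: sqnorm_upto_def)
  have "cmod (coef_functional g a t) \<le> sqrt B * l2_norm a" if a: "a \<in> l2" for a t
  proof -
    have "cmod (coef_functional g a t) \<le> sqrt B * sqrt (sqnorm a t)"
      using coef_functional_minus_sum_le[OF g_bounded a, of t 0] by (simp add: sqnorm_upto_def)
    also have "\<dots> \<le> sqrt B * l2_norm a"
      using real_sqrt_le_mono[OF sqnorm_le_l2_norm[OF a, of t]] l2_norm_nonneg[OF a] B
      by (intro mult_left_mono) auto
    finally show ?thesis .
  qed
  then have "supnorm (coef_functional g a) \<le> sqrt B * l2_norm a" if "a \<in> l2" for a
    using that by (intro supnorm_le) auto
  then show ?thesis
    unfolding dual1_def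
    using coef_functional_CX[OF g_bounded g] coef_functional_add[OF g_bounded] coef_functional_scale[OF g_bounded]
    by blast
qed

lemma dual_norm_nonneg:
  fixes \<tau> :: "'a l2functional"
  assumes \<tau>: "\<tau> \<in> dual1"
  shows "0 \<le> dual_norm \<tau>"
proof -
  obtain C where "C \<ge> 0" and C: "\<And>a t. a \<in> l2 \<Longrightarrow> cmod (\<tau> a t) \<le> C * l2_norm a"
    using dual1_bound[OF \<tau>] by blast
  let ?S = "{supnorm (\<tau> a) |a. a \<in> l2 \<and> l2_norm a \<le> 1}"
  have "bdd_above ?S"
  proof (rule bdd_aboveI)
    fix y assume "y \<in> ?S"
    then obtain a where a: "a \<in> l2" "l2_norm a \<le> 1" and y: "y = supnorm (\<tau> a)" by blast
    have "C * l2_norm a \<le> C" using a \<open>C \<ge> 0\<close> by (simp add: mult_left_le)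
    then show "y \<le> C" unfolding y using C[OF a(1)] by (intro supnorm_le) (meson order_trans)
  qed
  moreover have "supnorm (\<tau> (\<lambda>i t. 0)) \<in> ?S"
    by (intro CollectI exI[of _ "\<lambda>i t. 0"]) (simp add: zero_l2)
  ultimately have "supnorm (\<tau> (\<lambda>i t. 0)) \<le> dual_norm \<tau>"
    unfolding dual_norm_def by (intro cSup_upper)
  then show ?thesis using CX_supnorm_nonneg[OF dual1_CX[OF \<tau> zero_l2]] by linarith
qed

lemma dual_add_dual1:
  fixes \<tau> \<sigma> :: "'a l2functional"
  assumes \<tau>: "\<tau> \<in> dual1" and \<sigma>: "\<sigma> \<in> dual1"
  shows "dual_add \<tau> \<sigma> \<in> dual1"
proof -
  obtain C where "C \<ge> 0" and C: "\<And>a t. a \<in> l2 \<Longrightarrow> cmod (\<tau> a t) \<le> C * l2_norm a"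
    using dual1_bound[OF \<tau>] by blast
  obtain C' where "C' \<ge> 0" and C': "\<And>a t. a \<in> l2 \<Longrightarrow> cmod (\<sigma> a t) \<le> C' * l2_norm a"
    using dual1_bound[OF \<sigma>] by blast
  have "supnorm (dual_add \<tau> \<sigma> a) \<le> (C + C') * l2_norm a" if a: "a \<in> l2" for a
  proof (rule supnorm_le)
    fix t
    have "norm (\<tau> a t + \<sigma> a t) \<le> C * l2_norm a + C' * l2_norm a"
      using norm_triangle_ineq[of "\<tau> a t" "\<sigma> a t"] C[OF a, of t] C'[OF a, of t] by linarith
    then show "norm (dual_add \<tau> \<sigma> a t) \<le> (C + C') * l2_norm a"
      by (simp add: dual_add_def distrib_right)
  qed
  moreover have "dual_add \<tau> \<sigma> a \<in> CX" if "a \<in> l2" for a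
    unfolding dual_add_def by (rule CX_add[OF dual1_CX[OF \<tau> that] dual1_CX[OF \<sigma> that]])
  moreover have "dual_add \<tau> \<sigma> (l2_add a b) = (\<lambda>t. dual_add \<tau> \<sigma> a t + dual_add \<tau> \<sigma> b t)"
    if "a \<in> l2" "b \<in> l2" for a b
    using dual1_add[OF \<tau> that] dual1_add[OF \<sigma> that] by (simp add: dual_add_def fun_eq_iff algebra_simps)
  moreover have "dual_add \<tau> \<sigma> (l2_scale a f) = (\<lambda>t. dual_add \<tau> \<sigma> a t * f t)"
    if "a \<in> l2" "f \<in> CX" for a f
    using dual1_scale[OF \<tau> that] dual1_scale[OF \<sigma> that] by (simp add: dual_add_def fun_eq_iff algebra_simps)
  ultimately show ?thesis
    unfolding dual1_def by (intro CollectI conjI exI[of _ "C + C'"]) blast+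
qed

lemma dual_scale_dual1:
  fixes \<tau> :: "'a l2functional"
  assumes \<tau>: "\<tau> \<in> dual1" and f: "f \<in> CX"
  shows "dual_scale \<tau> f \<in> dual1"
proof -
  obtain C where "C \<ge> 0" and C: "\<And>a t. a \<in> l2 \<Longrightarrow> cmod (\<tau> a t) \<le> C * l2_norm a"
    using dual1_bound[OF \<tau>] by blast
  have "supnorm (dual_scale \<tau> f a) \<le> (supnorm f * C) * l2_norm a" if a: "a \<in> l2" for a
  proof (rule supnorm_le)
    fix t
    have "norm (f t) * norm (\<tau> a t) \<le> supnorm f * (C * l2_norm a)"
      by (intro mult_mono CX_norm_le_supnorm[OF f] C[OF a] CX_supnorm_nonneg[OF f]) auto
    then show "norm (dual_scale \<tau> f a t) \<le> (supnorm f * C) * l2_norm a"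
      by (simp add: dual_scale_def norm_mult mult.assoc)
  qed
  moreover have "dual_scale \<tau> f a \<in> CX" if "a \<in> l2" for a
    unfolding dual_scale_def by (rule CX_mult[OF CX_cnj[OF f] dual1_CX[OF \<tau> that]])
  moreover have "dual_scale \<tau> f (l2_add a b) = (\<lambda>t. dual_scale \<tau> f a t + dual_scale \<tau> f b t)"
    if "a \<in> l2" "b \<in> l2" for a b
    using dual1_add[OF \<tau> that] by (simp add: dual_scale_def fun_eq_iff algebra_simps)
  moreover have "dual_scale \<tau> f (l2_scale a g) = (\<lambda>t. dual_scale \<tau> f a t * g t)"
    if "a \<in> l2" "g \<in> CX" for a g
    using dual1_scale[OF \<tau> that] by (simp add: dual_scale_def fun_eq_iff algebra_simps)
  ultimately show ?thesis
    unfolding dual1_def by (intro CollectI conjI exI[of _ "supnorm f * C"]) blast+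
qed

lemma coord_dual1: "(coord i :: 'a l2functional) \<in> dual1"
proof -
  have "supnorm (coord i a) \<le> 1 * l2_norm a" if "a \<in> (l2 :: 'a l2vec set)" for a
    unfolding coord_def using norm_le_l2_norm[OF that] by (intro supnorm_le) simp
  then show ?thesis
    unfolding dual1_def by (auto simp: coord_def l2_add_def l2_scale_def l2_CX intro!: exI[of _ 1])
qed

lemma coef_functional_upto_dual1: "(\<And>i. g i \<in> CX) \<Longrightarrow> (coef_functional_upto n g :: 'a l2functional) \<in> dual1"
  by (induction n)
    (simp_all add: coef_functional_upto_0 zero_dual1 coef_functional_upto_Suc dual_add_dual1 dual_scale_dual1
      coord_dual1 CX_cnj)

lemma dual2_bound:
  fixes F :: "'a l2functional \<Rightarrow> 'a \<Rightarrow> complex"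
  assumes F: "F \<in> dual2"
  obtains D where "D \<ge> 0" "\<And>\<tau> t. \<tau> \<in> dual1 \<Longrightarrow> cmod (F \<tau> t) \<le> D * dual_norm \<tau>"
proof -
  obtain D where D: "\<And>\<tau>. \<tau> \<in> dual1 \<Longrightarrow> supnorm (F \<tau>) \<le> D * dual_norm \<tau>"
    using F unfolding dual2_def by blast
  have "cmod (F \<tau> t) \<le> max D 0 * dual_norm \<tau>" if "\<tau> \<in> dual1" for \<tau> t
    using CX_norm_le_supnorm[OF dual2_CX[OF F that], of t] D[OF that]
      mult_right_mono[OF max.cobounded1 dual_norm_nonneg[OF that], of D 0] by linarith
  then show ?thesis using that[of "max D 0"] by simp
qed

lemma dual2_vec_CX: "F \<in> dual2 \<Longrightarrow> dual2_vec F i \<in> (CX :: ('a \<Rightarrow> complex) set)"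
  unfolding dual2_vec_def by (rule CX_cnj, rule dual2_CX[OF _ coord_dual1])

lemma dual2_coef_functional_upto:
  fixes g :: "'a l2vec"
  assumes F: "F \<in> dual2" and g: "\<And>i. g i \<in> CX"
  shows "F (coef_functional_upto n g) = (\<lambda>t. \<Sum>i<n. cnj (dual2_vec F i t) * cnj (g i t))"
proof (induction n)
  case 0
  then show ?case by (simp add: coef_functional_upto_0 dual2_zero[OF F])
next
  case (Suc n)
  have "F (coef_functional_upto (Suc n) g)
      = (\<lambda>t. F (coef_functional_upto n g) t + F (dual_scale (coord n) (\<lambda>t. cnj (g n t))) t)"
    unfolding coef_functional_upto_Suc
    by (rule dual2_add[OF F coef_functional_upto_dual1[OF g] dual_scale_dual1[OF coord_dual1 CX_cnj[OF g]]])
  also have "F (dual_scale (coord n) (\<lambda>t. cnj (g n t))) = (\<lambda>t. F (coord n) t * cnj (g n t))"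
    by (rule dual2_scale[OF F coord_dual1 CX_cnj[OF g]])
  finally show ?case using Suc by (simp add: dual2_vec_def)
qed

lemma dual2_vec_bounded:
  fixes F :: "'a l2functional \<Rightarrow> 'a \<Rightarrow> complex"
  assumes F: "F \<in> dual2"
  obtains B where "\<And>m t. sqnorm_upto (dual2_vec F) m t \<le> B"
proof -
  obtain D where "D \<ge> 0" and D: "\<And>\<tau> t. \<tau> \<in> dual1 \<Longrightarrow> cmod (F \<tau> t) \<le> D * dual_norm \<tau>"
    using dual2_bound[OF F] by blast
  let ?x = "dual2_vec F"
  have "sqnorm_upto ?x m t \<le> D^2" for m t
  proof (rule le_square_if_le_mult_sqrt_SUP[OF _ sqnorm_upto_nonneg \<open>D \<ge> 0\<close>])
    show cont: "continuous_on UNIV (sqnorm_upto ?x m)"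
      by (rule continuous_sqnorm_upto, rule dual2_vec_CX[OF F])
    \<comment> \<open>apply \<open>F\<close> to the functional with coefficients \<open>x\<^sup>*\<close> truncated at \<open>m\<close>\<close>
    define g where "g = (\<lambda>i t. cnj (?x i t))"
    have g: "g i \<in> CX" for i unfolding g_def by (rule CX_cnj, rule dual2_vec_CX[OF F])
    have norm_le: "dual_norm (coef_functional_upto m g) \<le> sqrt (SUP t. sqnorm_upto ?x m t)"
    proof (rule dual_norm_le)
      fix a :: "'a l2vec" and t assume a: "a \<in> l2" and "l2_norm a \<le> 1"
      then have "sqnorm_upto a m t \<le> 1"
        using sqnorm_upto_le_l2_norm[OF a, of m t] power_le_one[OF l2_norm_nonneg[OF a] \<open>l2_norm a \<le> 1\<close>, of 2]
        by linarith
      moreover have "sqnorm_upto ?x m t \<le> (SUP t. sqnorm_upto ?x m t)"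
        by (rule continuous_le_SUP[OF cont])
      ultimately have "sqrt (sqnorm_upto g m t) * sqrt (sqnorm_upto a m t) \<le> sqrt (SUP t. sqnorm_upto ?x m t) * 1"
        using sqnorm_upto_nonneg[of ?x m t] sqnorm_upto_nonneg[of a m t]
        by (intro mult_mono) (auto simp: g_def sqnorm_upto_def)
      then show "cmod (coef_functional_upto m g a t) \<le> sqrt (SUP t. sqnorm_upto ?x m t)"
        using cmod_sum_mult_le[of "\<lambda>i. g i t" "\<lambda>i. a i t" "{..<m}"]
        by (simp add: coef_functional_upto_def sqnorm_upto_def[symmetric])
    qed
    fix t
    have "F (coef_functional_upto m g) t = complex_of_real (sqnorm_upto ?x m t)"
      unfolding dual2_coef_functional_upto[OF F g] by (simp add: g_def sum_cnj_mult_self)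
    then have "sqnorm_upto ?x m t = cmod (F (coef_functional_upto m g) t)"
      by (simp add: sqnorm_upto_nonneg)
    also have "\<dots> \<le> D * dual_norm (coef_functional_upto m g)" by (rule D[OF coef_functional_upto_dual1[OF g]])
    also have "\<dots> \<le> D * sqrt (SUP t. sqnorm_upto ?x m t)"
      using norm_le \<open>D \<ge> 0\<close> by (rule mult_left_mono)
    finally show "sqnorm_upto ?x m t \<le> D * sqrt (SUP t. sqnorm_upto ?x m t)" .
  qed
  then show ?thesis using that by blast
qed

subsection \<open>Localisation at points of small tails\<close>

lemma bump_function:
  assumes "open W" "t0 \<in> W"
  obtains f :: "'a \<Rightarrow> real"
  where "continuous_on UNIV f" "f t0 = 1" "\<And>t. 0 \<le> f t" "\<And>t. f t \<le> 1" "\<And>t. t \<notin> W \<Longrightarrow> f t = 0"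
proof -
  have "completely_regular_space (euclidean :: 'a topology)"
    using compact_space_euclidean Hausdorff_space_t2_euclidean
      compact_Hausdorff_or_regular_imp_normal_space normal_imp_completely_regular_space by blast
  moreover have "closedin euclidean (- W)" "t0 \<in> topspace euclidean - (- W)"
    using assms by (auto simp: closed_open)
  ultimately obtain g :: "'a \<Rightarrow> real"
    where g: "continuous_map euclidean (top_of_set {0..1}) g" "g t0 = 0" "g ` (- W) \<subseteq> {1}"
    unfolding completely_regular_space_def by metis
  then have "continuous_on UNIV g" "\<And>t. g t \<in> {0..1}"
    using continuous_map_subtopology_eu[of UNIV "{0..1}" g] by auto
  with g(2,3) show ?thesis
    by (intro that[of "\<lambda>t. 1 - g t"]) (auto intro!: continuous_intros)
qed

lemma dual1_tail_le:
  fixes \<tau> :: "'a l2functional"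
  assumes \<tau>: "\<tau> \<in> dual1" and a: "a \<in> l2"
    and small: "\<And>m. (\<Sum>i\<in>{n..<m}. (cmod (dual_coef \<tau> i t))^2) \<le> \<delta>"
  shows "cmod (\<tau> (l2_tail n a) t) \<le> sqrt \<delta> * l2_norm a"
proof -
  let ?c = "\<lambda>i. if i < n then 0 else dual_coef \<tau> i t"
  have "(\<lambda>i. dual_coef \<tau> i t * l2_tail n a i t) sums \<tau> (l2_tail n a) t"
    by (rule dual1_sums[OF \<tau> l2_tail_l2[OF a]])
  moreover have "(\<lambda>i. dual_coef \<tau> i t * l2_tail n a i t) = (\<lambda>i. ?c i * a i t)"
    by (simp add: l2_tail_def fun_eq_iff)
  ultimately have "(\<lambda>i. ?c i * a i t) sums \<tau> (l2_tail n a) t" by simp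
  then have "cmod (\<tau> (l2_tail n a) t) \<le> sqrt \<delta> * sqrt ((l2_norm a)^2)"
  proof (rule cmod_sums_mult_le)
    show "(\<Sum>i<m. (cmod (?c i))^2) \<le> \<delta>" for m
    proof -
      have "(\<Sum>i<m. (cmod (?c i))^2) = (\<Sum>i\<in>{n..<m}. (cmod (dual_coef \<tau> i t))^2)"
        by (rule sum.mono_neutral_cong_right) auto
      then show ?thesis using small[of m] by simp
    qed
    show "(\<Sum>i<m. (cmod (a i t))^2) \<le> (l2_norm a)^2" for m
      using sqnorm_upto_le_l2_norm[OF a] by (simp add: sqnorm_upto_def)
  qed
  then show ?thesis using l2_norm_nonneg[OF a] by simp
qed

lemma tail_functional:
  fixes \<tau> :: "'a l2functional" and n :: nat
  defines "\<omega> \<equiv> dual_add \<tau> (dual_scale (coef_functional_upto n (dual_coef \<tau>)) (\<lambda>t. -1))"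
  assumes \<tau>: "\<tau> \<in> dual1"
  shows tail_functional_dual1: "\<omega> \<in> dual1"
    and tail_functional_eq: "a \<in> l2 \<Longrightarrow> \<omega> a t = \<tau> (l2_tail n a) t"
    and dual2_tail_functional: "F \<in> dual2 \<Longrightarrow>
      F \<omega> t = F \<tau> t - (\<Sum>i<n. cnj (dual2_vec F i t) * cnj (dual_coef \<tau> i t))"
proof -
  have c: "dual_coef \<tau> i \<in> CX" for i by (rule dual_coef_CX[OF \<tau>])
  have \<rho>: "coef_functional_upto n (dual_coef \<tau>) \<in> dual1" by (rule coef_functional_upto_dual1[OF c])
  have minus_one: "(\<lambda>t. -1) \<in> CX" by simp
  show "\<omega> \<in> dual1"
    unfolding \<omega>_def by (intro dual_add_dual1[OF \<tau>] dual_scale_dual1[OF \<rho> minus_one])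
  show "\<omega> a t = \<tau> (l2_tail n a) t" if "a \<in> l2"
    using dual1_eq_head_plus_tail[OF \<tau> that, of t n]
    by (simp add: \<omega>_def dual_add_def dual_scale_def coef_functional_upto_def)
  show "F \<omega> t = F \<tau> t - (\<Sum>i<n. cnj (dual2_vec F i t) * cnj (dual_coef \<tau> i t))" if F: "F \<in> dual2"
    unfolding \<omega>_def
    using dual2_add[OF F \<tau> dual_scale_dual1[OF \<rho> minus_one]] dual2_scale[OF F \<rho> minus_one]
    by (simp add: dual2_coef_functional_upto[OF F c])
qed

lemma dual2_localize:
  fixes F :: "'a l2functional \<Rightarrow> 'a \<Rightarrow> complex" and \<tau> :: "'a l2functional"
  assumes F: "F \<in> dual2" and "D \<ge> 0" and D: "\<And>\<tau> t. \<tau> \<in> dual1 \<Longrightarrow> cmod (F \<tau> t) \<le> D * dual_norm \<tau>"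
    and \<tau>: "\<tau> \<in> dual1" and W: "open W" "t0 \<in> W" and "\<delta> \<ge> 0"
    and small: "\<And>t m. t \<in> W \<Longrightarrow> (\<Sum>i\<in>{n..<m}. (cmod (dual_coef \<tau> i t))^2) \<le> \<delta>"
  shows "cmod (F \<tau> t0 - (\<Sum>i<n. cnj (dual2_vec F i t0) * cnj (dual_coef \<tau> i t0))) \<le> D * sqrt \<delta>"
proof -
  define \<omega> where "\<omega> = dual_add \<tau> (dual_scale (coef_functional_upto n (dual_coef \<tau>)) (\<lambda>t. -1))"
  obtain f :: "'a \<Rightarrow> real" where f: "continuous_on UNIV f" "f t0 = 1" "\<And>t. 0 \<le> f t" "\<And>t. f t \<le> 1"
    "\<And>t. t \<notin> W \<Longrightarrow> f t = 0"
    using bump_function[OF W] by blast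
  define fc where "fc t = complex_of_real (f t)" for t
  have fc: "fc \<in> CX" using f(1) by (auto simp: fc_def CX_def intro!: continuous_intros)
  have \<omega>f: "dual_scale \<omega> fc \<in> dual1"
    unfolding \<omega>_def by (rule dual_scale_dual1[OF tail_functional_dual1[OF \<tau>] fc])
  have "dual_norm (dual_scale \<omega> fc) \<le> sqrt \<delta>"
  proof (rule dual_norm_le)
    fix a :: "'a l2vec" and t assume a: "a \<in> l2" and "l2_norm a \<le> 1"
    show "cmod (dual_scale \<omega> fc a t) \<le> sqrt \<delta>"
    proof (cases "t \<in> W")
      case True
      have "cmod (\<tau> (l2_tail n a) t) \<le> sqrt \<delta> * 1"
        using dual1_tail_le[OF \<tau> a small[OF True]] \<open>l2_norm a \<le> 1\<close>
        by (meson mult_left_mono order_trans real_sqrt_ge_zero \<open>\<delta> \<ge> 0\<close>)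
      then have "f t * cmod (\<tau> (l2_tail n a) t) \<le> 1 * (sqrt \<delta> * 1)"
        using f(3,4) by (intro mult_mono) auto
      then show ?thesis
        using f(3)[of t] tail_functional_eq[OF \<tau> a]
        by (simp add: \<omega>_def dual_scale_def fc_def norm_mult)
    qed (simp add: dual_scale_def fc_def f(5) \<open>\<delta> \<ge> 0\<close>)
  qed
  have "F \<tau> t0 - (\<Sum>i<n. cnj (dual2_vec F i t0) * cnj (dual_coef \<tau> i t0)) = F (dual_scale \<omega> fc) t0"
    using dual2_scale[OF F tail_functional_dual1[OF \<tau>] fc] f(2) dual2_tail_functional[OF \<tau> F]
    by (simp add: \<omega>_def fc_def)
  also have "cmod \<dots> \<le> D * dual_norm (dual_scale \<omega> fc)"
    by (rule D[OF \<omega>f])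
  also have "\<dots> \<le> D * sqrt \<delta>"
    using \<open>dual_norm (dual_scale \<omega> fc) \<le> sqrt \<delta>\<close> \<open>D \<ge> 0\<close> by (rule mult_left_mono)
  finally show ?thesis .
qed

lemma dual2_sums_if_small_tails:
  fixes F :: "'a l2functional \<Rightarrow> 'a \<Rightarrow> complex" and \<tau> :: "'a l2functional"
  assumes F: "F \<in> dual2" and \<tau>: "\<tau> \<in> dual1" and small: "small_tails_at (dual_coef \<tau>) t0"
  shows "(\<lambda>i. cnj (dual2_vec F i t0) * cnj (dual_coef \<tau> i t0)) sums F \<tau> t0"
  unfolding sums_def LIMSEQ_iff
proof (intro allI impI)
  fix r :: real assume "r > 0"
  obtain D where "D \<ge> 0" and D: "\<And>\<tau> t. \<tau> \<in> dual1 \<Longrightarrow> cmod (F \<tau> t) \<le> D * dual_norm \<tau>"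
    using dual2_bound[OF F] by blast
  then obtain \<epsilon> where "\<epsilon> > 0" "D * sqrt \<epsilon> < r"
    using exists_pos_mult_sqrt_less \<open>r > 0\<close> by blast
  then obtain n0 W where W: "open W" "t0 \<in> W"
    and n0: "\<And>t m. t \<in> W \<Longrightarrow> (\<Sum>i\<in>{n0..<m}. (cmod (dual_coef \<tau> i t))^2) \<le> \<epsilon>"
    using small unfolding small_tails_at_def by meson
  have "cmod ((\<Sum>i<n. cnj (dual2_vec F i t0) * cnj (dual_coef \<tau> i t0)) - F \<tau> t0) < r" if "n \<ge> n0" for n
  proof -
    have "(\<Sum>i\<in>{n..<m}. (cmod (dual_coef \<tau> i t))^2) \<le> \<epsilon>" if "t \<in> W" for t m
      using n0[OF that, of m] sum_mono2[of "{n0..<m}" "{n..<m}" "\<lambda>i. (cmod (dual_coef \<tau> i t))^2"] \<open>n \<ge> n0\<close>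
      by fastforce
    then have "cmod (F \<tau> t0 - (\<Sum>i<n. cnj (dual2_vec F i t0) * cnj (dual_coef \<tau> i t0))) \<le> D * sqrt \<epsilon>"
      using \<open>\<epsilon> > 0\<close> by (intro dual2_localize[OF F \<open>D \<ge> 0\<close> D \<tau> W]) auto
    then show ?thesis using \<open>D * sqrt \<epsilon> < r\<close> by (simp add: norm_minus_commute)
  qed
  then show "\<exists>N. \<forall>n\<ge>N. cmod ((\<Sum>i<n. cnj (dual2_vec F i t0) * cnj (dual_coef \<tau> i t0)) - F \<tau> t0) < r"
    by blast
qed

lemma dense_Union_interior_of_closed_cover:
  fixes E :: "nat \<Rightarrow> 'a set"
  assumes closed: "\<And>n. closed (E n)" and cover: "\<And>t. \<exists>n. t \<in> E n"
  shows "closure (\<Union>n. interior (E n)) = UNIV"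
proof -
  let ?H = "range (\<lambda>n. E n - interior (E n))"
  have "euclidean interior_of (\<Union>?H) = {}"
  proof (rule Baire_category_alt)
    show "completely_metrizable_space (euclidean :: 'a topology) \<or>
        locally_compact_space (euclidean :: 'a topology) \<and> regular_space (euclidean :: 'a topology)"
      using locally_compact_regular_euclidean by blast
    fix T assume "T \<in> ?H"
    then obtain n where T: "T = E n - interior (E n)" by blast
    have "interior T \<subseteq> interior (E n) \<inter> T"
      unfolding T using interior_mono[of T "E n"] interior_subset[of T] by (auto simp: T)
    then show "closedin euclidean T \<and> euclidean interior_of T = {}"
      using closed[of n] by (auto simp: T closed_Diff)
  qed simp
  then have H: "interior (\<Union>?H) = {}" by simp
  have "- (\<Union>n. interior (E n)) \<subseteq> \<Union>?H"
  proof
    fix t assume t: "t \<in> - (\<Union>n. interior (E n))"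
    obtain n where "t \<in> E n" using cover by blast
    with t show "t \<in> \<Union>?H" by blast
  qed
  then have "interior (- (\<Union>n. interior (E n))) = {}"
    using interior_mono H by blast
  then have "- closure (\<Union>n. interior (E n)) = {}"
    by (simp only: interior_complement)
  then show ?thesis by blast
qed

lemma dense_tail_interiors:
  fixes g :: "'a l2vec"
  assumes g: "\<And>i. g i \<in> CX" and g_bounded: "\<And>m t. sqnorm_upto g m t \<le> B" and "\<epsilon> > 0"
  shows "closure (\<Union>n. interior {t. \<forall>m. (\<Sum>i\<in>{n..<m}. (cmod (g i t))^2) \<le> \<epsilon>}) = UNIV"
proof (rule dense_Union_interior_of_closed_cover)
  fix n
  have "closed {t. (\<Sum>i\<in>{n..<m}. (cmod (g i t))^2) \<le> \<epsilon>}" for m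
    by (rule closed_Collect_le) (use g in \<open>auto simp: CX_def intro!: continuous_intros\<close>)
  then show "closed {t. \<forall>m. (\<Sum>i\<in>{n..<m}. (cmod (g i t))^2) \<le> \<epsilon>}"
    unfolding Collect_all_eq by blast
next
  fix t
  have summable: "summable (\<lambda>i. (cmod (g i t))^2)"
    by (rule summable_if_sqnorm_upto_bounded[of g t B, OF g_bounded])
  obtain n where "sqnorm g t - \<epsilon> < sqnorm_upto g n t"
    using order_tendstoD(1)[OF sqnorm_upto_tendsto[of g t, OF summable], of "sqnorm g t - \<epsilon>"] \<open>\<epsilon> > 0\<close>
    by (auto simp: eventually_sequentially)
  then have "(\<Sum>i\<in>{n..<m}. (cmod (g i t))^2) \<le> \<epsilon>" for m
    using sum_ivl_le_sqnorm_tail[of g t n m, OF summable] by linarith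
  then show "\<exists>n. t \<in> {t. \<forall>m. (\<Sum>i\<in>{n..<m}. (cmod (g i t))^2) \<le> \<epsilon>}" by blast
qed

lemma small_tails_dense:
  fixes g :: "'a l2vec"
  assumes g: "\<And>i. g i \<in> CX" and g_bounded: "\<And>m t. sqnorm_upto g m t \<le> B"
  shows "closure {t. small_tails_at g t} = UNIV"
proof -
  define G where
    "G k = (\<Union>n. interior {t. \<forall>m. (\<Sum>i\<in>{n..<m}. (cmod (g i t))^2) \<le> 1 / real (Suc k)})" for k
  have "euclidean closure_of \<Inter>(range G) = topspace euclidean"
  proof (rule Baire_category)
    fix T assume "T \<in> range G"
    then obtain k where T: "T = G k" by blast
    have "closure (G k) = UNIV"
      unfolding G_def by (rule dense_tail_interiors[OF g g_bounded]) simp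
    moreover have "open (G k)" unfolding G_def by blast
    ultimately show "openin euclidean T \<and> euclidean closure_of T = topspace euclidean"
      by (simp add: T)
  qed (use locally_compact_regular_euclidean in auto)
  then have "closure (\<Inter>(range G)) = UNIV" by simp
  moreover have "\<Inter>(range G) \<subseteq> {t. small_tails_at g t}"
  proof
    fix t assume t: "t \<in> \<Inter>(range G)"
    have "small_tails_at g t" unfolding small_tails_at_def
    proof (intro allI impI)
      fix \<epsilon> :: real assume "\<epsilon> > 0"
      then obtain k where k: "1 / real (Suc k) < \<epsilon>"
        using nat_approx_posE by blast
      obtain n where n: "t \<in> interior {t. \<forall>m. (\<Sum>i\<in>{n..<m}. (cmod (g i t))^2) \<le> 1 / real (Suc k)}"
        using t by (auto simp: G_def)
      have "(\<Sum>i\<in>{n..<m}. (cmod (g i s))^2) \<le> \<epsilon>"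
        if "s \<in> interior {t. \<forall>m. (\<Sum>i\<in>{n..<m}. (cmod (g i t))^2) \<le> 1 / real (Suc k)}" for s m
      proof -
        have "(\<Sum>i\<in>{n..<m}. (cmod (g i s))^2) \<le> 1 / real (Suc k)"
          using interior_subset that by blast
        then show ?thesis using k by linarith
      qed
      then show "\<exists>n W. open W \<and> t \<in> W \<and> (\<forall>s\<in>W. \<forall>m. (\<Sum>i\<in>{n..<m}. (cmod (g i s))^2) \<le> \<epsilon>)"
        using n by (intro exI[of _ n] exI[of _ "interior _"]) blast
    qed
    then show "t \<in> {t. small_tails_at g t}" by simp
  qed
  ultimately show ?thesis
    using closure_mono by blast
qed

lemma dual2_eq_canonical:
  fixes F :: "'a l2functional \<Rightarrow> 'a \<Rightarrow> complex" and \<tau> :: "'a l2functional"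
  assumes F: "F \<in> dual2" and x: "dual2_vec F \<in> l2" and \<tau>: "\<tau> \<in> dual1"
  shows "F \<tau> = canonical_l2 (dual2_vec F) \<tau>"
proof -
  let ?x = "dual2_vec F"
  obtain B where "\<And>m t. sqnorm_upto (dual_coef \<tau>) m t \<le> B"
    using dual_coef_bounded[OF \<tau>] by blast
  then have dense: "closure {t. small_tails_at (dual_coef \<tau>) t} = UNIV"
    by (rule small_tails_dense[OF dual_coef_CX[OF \<tau>]])
  have "closed {t. F \<tau> t = cnj (\<tau> ?x t)}"
    using dual2_CX[OF F \<tau>] dual1_CX[OF \<tau> x]
    by (intro closed_Collect_eq) (auto simp: CX_def intro!: continuous_intros)
  moreover have "{t. small_tails_at (dual_coef \<tau>) t} \<subseteq> {t. F \<tau> t = cnj (\<tau> ?x t)}"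
  proof clarify
    fix t assume "small_tails_at (dual_coef \<tau>) t"
    then have "(\<lambda>i. cnj (?x i t) * cnj (dual_coef \<tau> i t)) sums F \<tau> t"
      by (rule dual2_sums_if_small_tails[OF F \<tau>])
    moreover have "(\<lambda>i. cnj (?x i t) * cnj (dual_coef \<tau> i t)) sums cnj (\<tau> ?x t)"
      using sums_cnj[THEN iffD2, OF dual1_sums[OF \<tau> x, of t]] by (simp add: mult.commute)
    ultimately show "F \<tau> t = cnj (\<tau> ?x t)" by (rule sums_unique2)
  qed
  ultimately have "closure {t. small_tails_at (dual_coef \<tau>) t} \<subseteq> {t. F \<tau> t = cnj (\<tau> ?x t)}"
    by (intro closure_minimal)
  then show ?thesis using dense by (auto simp: canonical_l2_def fun_eq_iff)
qed

subsection \<open>A closed copy of \<open>\<beta>\<nat>\<close>\<close>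

lemma regular_open_nbhd:
  fixes V :: "'a set"
  assumes "open V" "q \<in> V"
  obtains W where "open W" "q \<in> W" "closure W \<subseteq> V"
proof -
  have "closedin euclidean (- V)" "q \<in> topspace euclidean - (- V)"
    using assms by (auto simp: closed_open)
  then obtain W W' where "openin euclidean W" "openin euclidean W'" "q \<in> W" "- V \<subseteq> W'" "disjnt W W'"
    using regular_space_euclidean_compact unfolding regular_space_def by metis
  then have "open W" "open W'" "q \<in> W" "- V \<subseteq> W'" "disjnt W W'" by auto
  then have "closure W \<subseteq> - W'"
    by (intro closure_minimal) (auto simp: disjnt_def open_closed)
  then show ?thesis using that \<open>open W\<close> \<open>q \<in> W\<close> \<open>- V \<subseteq> W'\<close> by blast
qed

context
  fixes s :: "nat \<Rightarrow> 'a"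
  assumes separated: "\<And>S. closure (s ` S) \<inter> closure (s ` (- S)) = {}"
begin

lemma in_closure_image_or_compl:
  assumes "q \<in> closure (range s)"
  shows "q \<in> closure (s ` S) \<or> q \<in> closure (s ` (- S))"
proof -
  have "range s = s ` S \<union> s ` (- S)" by auto
  then show ?thesis using assms by (metis Un_iff closure_Un)
qed

lemma accumulation_sets_ultrafilter:
  assumes q: "q \<in> closure (range s)"
  shows "accumulation_sets s q \<in> ultrafilters_nat"
proof -
  let ?U = "accumulation_sets s q"
  have "A \<inter> B \<in> ?U" if "A \<in> ?U" "B \<in> ?U" for A B
  proof (rule ccontr)
    assume "A \<inter> B \<notin> ?U"
    then have "q \<in> closure (s ` (- (A \<inter> B)))"
      using in_closure_image_or_compl[OF q, of "A \<inter> B"] by (auto simp: accumulation_sets_def)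
    then have "q \<in> closure (s ` (- A)) \<or> q \<in> closure (s ` (- B))"
      by (metis Compl_Int closure_Un image_Un Un_iff)
    then show False using that separated by (auto simp: accumulation_sets_def)
  qed
  moreover have "B \<in> ?U" if "A \<in> ?U" "A \<subseteq> B" for A B
    using that closure_mono[of "s ` A" "s ` B"] by (auto simp: accumulation_sets_def)
  moreover have "A \<in> ?U \<or> - A \<in> ?U" for A
    using in_closure_image_or_compl[OF q] by (auto simp: accumulation_sets_def)
  moreover have "{} \<notin> ?U" "UNIV \<in> ?U" using q by (simp_all add: accumulation_sets_def)
  ultimately show ?thesis unfolding ultrafilters_nat_def by blast
qed

lemma vimage_open_in_accumulation_sets:
  assumes "open V" "q \<in> closure (range s)" "q \<in> V"
  shows "s -` V \<in> accumulation_sets s q"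
proof -
  have "s ` (s -` V) = V \<inter> range s" by auto
  then show ?thesis
    using open_Int_closure_subset[OF \<open>open V\<close>, of "range s"] assms by (auto simp: accumulation_sets_def)
qed

lemma inj_on_accumulation_sets: "inj_on (accumulation_sets s) (closure (range s))"
proof (rule inj_onI, rule ccontr)
  fix q q' assume q: "q \<in> closure (range s)"
    and eq: "accumulation_sets s q = accumulation_sets s q'" and "q \<noteq> q'"
  obtain V V' where V: "open V" "open V'" "q \<in> V" "q' \<in> V'" "V \<inter> V' = {}"
    using hausdorff[OF \<open>q \<noteq> q'\<close>] by blast
  have "s -` V \<in> accumulation_sets s q'"
    using vimage_open_in_accumulation_sets[OF \<open>open V\<close> q \<open>q \<in> V\<close>] eq by simp
  then have "q' \<in> closure (s ` (s -` V))" by (simp add: accumulation_sets_def)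
  moreover have "closure (s ` (s -` V)) \<subseteq> - V'"
    using V by (intro closure_minimal) (auto simp: open_closed)
  ultimately show False using V by blast
qed

lemma accumulation_sets_surj:
  assumes U: "U \<in> ultrafilters_nat"
  obtains q where "q \<in> closure (range s)" "accumulation_sets s q = U"
proof -
  have "UNIV \<inter> \<Inter>((\<lambda>A. closure (s ` A)) ` U) \<noteq> {}"
  proof (rule compact_imp_fip[OF compact_UNIV])
    fix F' assume "finite F'" "F' \<subseteq> (\<lambda>A. closure (s ` A)) ` U"
    then obtain U' where U': "U' \<subseteq> U" "finite U'" "F' = (\<lambda>A. closure (s ` A)) ` U'"
      by (meson finite_subset_image)
    have "\<Inter>U' \<noteq> {}"
      using ultrafilters_nat_Inter[OF U U'(2,1)] U by (auto simp: ultrafilters_nat_def)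
    moreover have "s ` (\<Inter>U') \<subseteq> \<Inter>F'" using U' closure_subset by fastforce
    ultimately show "UNIV \<inter> \<Inter>F' \<noteq> {}" by blast
  qed auto
  then obtain q where q: "\<And>A. A \<in> U \<Longrightarrow> q \<in> closure (s ` A)" by blast
  have "q \<in> closure (range s)" using q[of UNIV] U by (simp add: ultrafilters_nat_def)
  moreover have "accumulation_sets s q = U"
  proof
    show "U \<subseteq> accumulation_sets s q" using q by (auto simp: accumulation_sets_def)
    show "accumulation_sets s q \<subseteq> U"
    proof
      fix S assume "S \<in> accumulation_sets s q"
      show "S \<in> U"
      proof (rule ccontr)
        assume "S \<notin> U"
        then have "- S \<in> U" using U by (auto simp: ultrafilters_nat_def)
        then show False using q \<open>S \<in> accumulation_sets s q\<close> separated by (auto simp: accumulation_sets_def)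
      qed
    qed
  qed
  ultimately show ?thesis by (rule that)
qed

lemma continuous_map_accumulation_sets:
  "continuous_map (subtopology euclidean (closure (range s))) betaN (accumulation_sets s)"
  unfolding continuous_map_def
proof (intro conjI allI impI)
  let ?X = "subtopology euclidean (closure (range s))"
  show "accumulation_sets s \<in> topspace ?X \<rightarrow> topspace betaN"
    using accumulation_sets_ultrafilter by (auto simp: topspace_betaN)
  fix V assume "openin betaN V"
  then have "generate_topology_on {{U \<in> ultrafilters_nat. A \<in> U} | A. True} V"
    unfolding betaN_def by (rule openin_topology_generated_by)
  then show "openin ?X {q \<in> topspace ?X. accumulation_sets s q \<in> V}"
  proof induction
    case Empty
    then show ?case by simp
  next
    case (Int a b)
    have "{q \<in> topspace ?X. accumulation_sets s q \<in> a \<inter> b}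
        = {q \<in> topspace ?X. accumulation_sets s q \<in> a} \<inter> {q \<in> topspace ?X. accumulation_sets s q \<in> b}"
      by auto
    then show ?case using Int by (simp add: openin_Int)
  next
    case (UN K)
    have "{q \<in> topspace ?X. accumulation_sets s q \<in> \<Union>K}
        = \<Union>((\<lambda>k. {q \<in> topspace ?X. accumulation_sets s q \<in> k}) ` K)"
      by auto
    moreover have "openin ?X (\<Union>((\<lambda>k. {q \<in> topspace ?X. accumulation_sets s q \<in> k}) ` K))"
      using UN.IH by (intro openin_Union) auto
    ultimately show ?case by simp
  next
    case (Basis b)
    then obtain A where b: "b = {U \<in> ultrafilters_nat. A \<in> U}" by blast
    have "{q \<in> topspace ?X. accumulation_sets s q \<in> b} = {q \<in> closure (range s). A \<in> accumulation_sets s q}"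
      using accumulation_sets_ultrafilter by (auto simp: b)
    also have "\<dots> = (- closure (s ` (- A))) \<inter> closure (range s)"
      using in_closure_image_or_compl separated by (auto simp: accumulation_sets_def)
    finally show ?case
      unfolding openin_subtopology by (intro exI[of _ "- closure (s ` (- A))"]) auto
  qed
qed

lemma inv_accumulation_sets:
  assumes "U \<in> ultrafilters_nat"
  shows "inv_into (closure (range s)) (accumulation_sets s) U \<in> closure (range s)"
    and "accumulation_sets s (inv_into (closure (range s)) (accumulation_sets s) U) = U"
proof -
  obtain q where "q \<in> closure (range s)" "accumulation_sets s q = U"
    using accumulation_sets_surj[OF assms] by blast
  then have "U \<in> accumulation_sets s ` closure (range s)" by blast
  then show "inv_into (closure (range s)) (accumulation_sets s) U \<in> closure (range s)"
    "accumulation_sets s (inv_into (closure (range s)) (accumulation_sets s) U) = U"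
    by (rule inv_into_into, rule f_inv_into_f)
qed

lemma inv_accumulation_sets_in_open:
  assumes "open V"
  shows "{U \<in> ultrafilters_nat. inv_into (closure (range s)) (accumulation_sets s) U \<in> V}
    = \<Union>{{U \<in> ultrafilters_nat. s -` W \<in> U} | W. open W \<and> closure W \<subseteq> V}"
    (is "{U \<in> _. ?\<phi> U \<in> V} = \<Union>?\<W>")
proof
  show "{U \<in> ultrafilters_nat. ?\<phi> U \<in> V} \<subseteq> \<Union>?\<W>"
  proof clarify
    fix U assume U: "U \<in> ultrafilters_nat" "?\<phi> U \<in> V"
    obtain W where W: "open W" "?\<phi> U \<in> W" "closure W \<subseteq> V"
      using regular_open_nbhd[OF \<open>open V\<close> U(2)] by blast
    have "s -` W \<in> U"
      using vimage_open_in_accumulation_sets[OF W(1) inv_accumulation_sets(1)[OF U(1)] W(2)]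
        inv_accumulation_sets(2)[OF U(1)] by simp
    then show "U \<in> \<Union>?\<W>" using W U(1) by blast
  qed
  show "\<Union>?\<W> \<subseteq> {U \<in> ultrafilters_nat. ?\<phi> U \<in> V}"
  proof
    fix U assume "U \<in> \<Union>?\<W>"
    then obtain W where W: "closure W \<subseteq> V" "U \<in> ultrafilters_nat" "s -` W \<in> U" by blast
    then have "s -` W \<in> accumulation_sets s (?\<phi> U)" using inv_accumulation_sets(2)[OF W(2)] by simp
    then have "?\<phi> U \<in> closure (s ` (s -` W))"
      by (simp only: accumulation_sets_def mem_Collect_eq)
    moreover have "closure (s ` (s -` W)) \<subseteq> closure W" by (simp add: closure_mono image_subset_iff)
    ultimately show "U \<in> {U \<in> ultrafilters_nat. ?\<phi> U \<in> V}" using W by auto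
  qed
qed

lemma continuous_map_inv_accumulation_sets:
  "continuous_map betaN (subtopology euclidean (closure (range s)))
     (inv_into (closure (range s)) (accumulation_sets s))"
  (is "continuous_map _ ?X ?\<phi>")
  unfolding continuous_map_def
proof (intro conjI allI impI)
  show "?\<phi> \<in> topspace betaN \<rightarrow> topspace ?X"
    using inv_accumulation_sets(1) by (auto simp: topspace_betaN)
  fix V assume "openin ?X V"
  then obtain V' where "open V'" and V: "V = V' \<inter> closure (range s)"
    by (auto simp: openin_subtopology)
  have "generate_topology_on {{U \<in> ultrafilters_nat. A \<in> U} | A. True}
      (\<Union>{{U \<in> ultrafilters_nat. s -` W \<in> U} | W. open W \<and> closure W \<subseteq> V'})"
    by (rule generate_topology_on.UN) (auto intro!: generate_topology_on.Basis)
  then have "openin betaN {U \<in> ultrafilters_nat. ?\<phi> U \<in> V'}"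
    unfolding betaN_def inv_accumulation_sets_in_open[OF \<open>open V'\<close>]
    by (simp add: openin_topology_generated_by_iff)
  moreover have "{U \<in> topspace betaN. ?\<phi> U \<in> V} = {U \<in> ultrafilters_nat. ?\<phi> U \<in> V'}"
    using inv_accumulation_sets(1) by (auto simp: V topspace_betaN)
  ultimately show "openin betaN {U \<in> topspace betaN. ?\<phi> U \<in> V}" by simp
qed

lemma closure_range_homeomorphic_betaN:
  "subtopology euclidean (closure (range s)) homeomorphic_space betaN"
  unfolding homeomorphic_space_def homeomorphic_maps_def
  using continuous_map_accumulation_sets continuous_map_inv_accumulation_sets
    inj_on_accumulation_sets accumulation_sets_surj
  by (metis (no_types, lifting) inv_into_f_f inv_accumulation_sets topspace_betaN
      topspace_euclidean_subtopology)

end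

subsection \<open>The candidate preimage lies in \<open>l\<^sub>2(C(X))\<close>\<close>

lemma decseq_closure_common_point:
  fixes A :: "nat \<Rightarrow> 'a set"
  assumes "\<And>m n. m \<le> n \<Longrightarrow> A n \<subseteq> A m" and "\<And>n. A n \<noteq> {}"
  obtains p where "\<And>n. p \<in> closure (A n)"
proof -
  have "UNIV \<inter> (\<Inter>n\<in>UNIV. closure (A n)) \<noteq> {}"
  proof (rule compact_imp_fip_image[OF compact_UNIV])
    fix N :: "nat set" assume "finite N"
    have "A (Max (insert 0 N)) \<subseteq> closure (A n)" if "n \<in> N" for n
    proof -
      have "n \<le> Max (insert 0 N)" using that \<open>finite N\<close> by simp
      then show ?thesis using assms(1) closure_subset by blast
    qed
    then have "A (Max (insert 0 N)) \<subseteq> (\<Inter>n\<in>N. closure (A n))" by blast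
    then show "UNIV \<inter> (\<Inter>n\<in>N. closure (A n)) \<noteq> {}" using assms(2) by blast
  qed simp
  then show ?thesis using that by blast
qed

lemma non_uniform_tail_cluster_point:
  fixes x :: "'a l2vec"
  assumes x: "\<And>i. x i \<in> CX" and bounded: "\<And>m t. sqnorm_upto x m t \<le> B" and "x \<notin> l2"
  obtains e p where "e > 0" "\<And>n. p \<in> closure {t. \<exists>m. e < sqnorm_upto x m t - sqnorm_upto x n t}"
proof -
  have summable: "summable (\<lambda>i. (cmod (x i t))^2)" for t
    by (rule summable_if_sqnorm_upto_bounded[of x t B, OF bounded])
  obtain \<epsilon> where "\<epsilon> > 0" and fail: "\<And>N. \<exists>n\<ge>N. \<exists>t. \<epsilon> \<le> sqnorm x t - sqnorm_upto x n t"
    using l2I[OF x summable] \<open>x \<notin> l2\<close> by (meson not_less)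
  define A where "A n = {t. \<exists>m. \<epsilon> / 2 < sqnorm_upto x m t - sqnorm_upto x n t}" for n
  have "A n \<subseteq> A m" if mn: "m \<le> n" for m n
  proof
    fix t assume "t \<in> A n"
    then obtain k where "\<epsilon> / 2 < sqnorm_upto x k t - sqnorm_upto x n t" by (auto simp: A_def)
    then show "t \<in> A m"
      using sqnorm_upto_mono[OF mn, of x t] unfolding A_def by (intro CollectI exI[of _ k]) linarith
  qed
  moreover have "A n \<noteq> {}" for n
  proof -
    obtain n' t where "n' \<ge> n" "\<epsilon> \<le> sqnorm x t - sqnorm_upto x n' t" using fail by blast
    then have "sqnorm_upto x n t + \<epsilon> / 2 < sqnorm x t"
      using sqnorm_upto_mono[of n n' x t] \<open>\<epsilon> > 0\<close> by simp
    then obtain k where "sqnorm_upto x n t + \<epsilon> / 2 < sqnorm_upto x k t"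
      using order_tendstoD(1)[OF sqnorm_upto_tendsto[of x t, OF summable]]
      by (auto simp: eventually_sequentially)
    then have "t \<in> A n" unfolding A_def by (intro CollectI exI[of _ k]) simp
    then show ?thesis by blast
  qed
  ultimately obtain p where "\<And>n. p \<in> closure (A n)"
    using decseq_closure_common_point by blast
  then show ?thesis using that[of "\<epsilon> / 2" p] \<open>\<epsilon> > 0\<close> by (simp add: A_def)
qed

text \<open>Near a cluster point of the sets where mass \<open>> e\<close> lies beyond index \<open>n\<close>, points of small
  tails can be chosen one after another, each carrying mass \<open>> e\<close> in a new block of indices.\<close>

lemma blocks_of_non_uniform_tail:
  fixes x :: "'a l2vec"
  assumes x: "\<And>i. x i \<in> CX" and bounded: "\<And>m t. sqnorm_upto x m t \<le> B" and "x \<notin> l2"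
  obtains e m t where "e > 0" "strict_mono m" "\<And>k. small_tails_at x (t k)"
    "\<And>k. sqnorm_upto x (m k) (t k) - sqnorm_upto x (m 0) (t k) < e / 4"
    "\<And>k. e < sqnorm_upto x (m (Suc k)) (t k) - sqnorm_upto x (m k) (t k)"
    "\<And>k. sqnorm x (t k) - sqnorm_upto x (m (Suc k)) (t k) < e / 8"
proof -
  have summable: "summable (\<lambda>i. (cmod (x i t))^2)" for t
    by (rule summable_if_sqnorm_upto_bounded[of x t B, OF bounded])
  have exceeds: "\<exists>m. c < sqnorm_upto x m t" if "c < sqnorm x t" for c t
    using order_tendstoD(1)[OF sqnorm_upto_tendsto[of x t, OF summable] that]
    by (auto simp: eventually_sequentially)
  have open_less: "open {t. c < sqnorm_upto x m t - sqnorm_upto x n t}"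
    "open {t. sqnorm_upto x m t - sqnorm_upto x n t < c}" for c m n
    by (rule open_Collect_less; use continuous_sqnorm_upto[OF x] in \<open>auto intro!: continuous_intros\<close>)+
  obtain e p where "e > 0" and p: "\<And>n. p \<in> closure {t. \<exists>m. e < sqnorm_upto x m t - sqnorm_upto x n t}"
    using non_uniform_tail_cluster_point[OF x bounded \<open>x \<notin> l2\<close>] by blast
  define A where "A n = {t. \<exists>m. e < sqnorm_upto x m t - sqnorm_upto x n t}" for n
  have open_A: "open (A n)" for n
    using open_less(1) unfolding A_def Collect_ex_eq by blast
  obtain n0 where "sqnorm x p - e / 8 < sqnorm_upto x n0 p"
    using exceeds[of "sqnorm x p - e / 8" p] \<open>e > 0\<close> by auto
  have dense: "closure {t. small_tails_at x t} = UNIV"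
    by (rule small_tails_dense[OF x bounded])
  define P where "P n t n' \<longleftrightarrow> small_tails_at x t \<and> sqnorm_upto x n t - sqnorm_upto x n0 t < e / 4
    \<and> e < sqnorm_upto x n' t - sqnorm_upto x n t \<and> sqnorm x t - sqnorm_upto x n' t < e / 8" for n t n'
  have "\<exists>t n'. n < n' \<and> P n t n'" for n
  proof -
    define V where "V = {t. sqnorm_upto x n t - sqnorm_upto x n0 t < e / 4} \<inter> A n"
    have "open V" unfolding V_def using open_less(2) open_A by blast
    have "p \<in> {t. sqnorm_upto x n t - sqnorm_upto x n0 t < e / 4}"
      using sqnorm_upto_le_sqnorm[of x p n, OF summable] \<open>sqnorm x p - e / 8 < _\<close> \<open>e > 0\<close> by simp
    then have "V \<noteq> {}"
      using p[of n] open_Int_closure_eq_empty[OF open_less(2)] unfolding V_def A_def by blast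
    then have "V \<inter> {t. small_tails_at x t} \<noteq> {}"
      using open_Int_closure_eq_empty[OF \<open>open V\<close>, of "{t. small_tails_at x t}"] dense by auto
    then obtain t where t: "t \<in> V" "small_tails_at x t" by blast
    obtain m1 where m1: "e < sqnorm_upto x m1 t - sqnorm_upto x n t" using t(1) by (auto simp: V_def A_def)
    obtain m2 where m2: "sqnorm x t - e / 8 < sqnorm_upto x m2 t"
      using exceeds[of "sqnorm x t - e / 8" t] \<open>e > 0\<close> by auto
    define n' where "n' = max (max m1 m2) (Suc n)"
    have "sqnorm_upto x m1 t \<le> sqnorm_upto x n' t" "sqnorm_upto x m2 t \<le> sqnorm_upto x n' t"
      by (auto intro!: sqnorm_upto_mono simp: n'_def)
    then have "n < n' \<and> P n t n'" using t m1 m2 by (auto simp: P_def V_def n'_def)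
    then show ?thesis by blast
  qed
  then obtain t m where "strict_mono m" "m 0 = n0" "\<And>k. P (m k) (t k) (m (Suc k))"
    using dependent_choice_strict_mono by blast
  then show ?thesis using that[of e m t] \<open>e > 0\<close> by (simp add: P_def)
qed

context
  fixes F :: "'a l2functional \<Rightarrow> 'a \<Rightarrow> complex" and g :: "'a l2vec"
  assumes F: "F \<in> dual2" and g: "\<And>i. g i \<in> CX"
    and dominated: "\<And>i t. cmod (g i t) \<le> cmod (dual2_vec F i t)"
begin

lemma coef_functional_dominated_dual1: "coef_functional g \<in> dual1"
proof -
  obtain B where B: "\<And>m t. sqnorm_upto (dual2_vec F) m t \<le> B"
    using dual2_vec_bounded[OF F] by blast
  have "sqnorm_upto g m t \<le> sqnorm_upto (dual2_vec F) m t" for m t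
    unfolding sqnorm_upto_def by (intro sum_mono power_mono dominated) auto
  then show ?thesis using B by (intro coef_functional_dual1[OF g, where B=B]) (meson order_trans)
qed

lemma dual2_coef_functional_dominated_sums:
  assumes "small_tails_at (dual2_vec F) t"
  shows "(\<lambda>i. cnj (dual2_vec F i t) * cnj (g i t)) sums F (coef_functional g) t"
  using dual2_sums_if_small_tails[OF F coef_functional_dominated_dual1] small_tails_at_mono[OF dominated assms]
  by (simp add: dual_coef_coef_functional)

end

lemma dual2_vec_blocks_separated:
  fixes F :: "'a l2functional \<Rightarrow> 'a \<Rightarrow> complex" and p :: "nat \<Rightarrow> 'a"
  defines "x \<equiv> dual2_vec F"
  assumes F: "F \<in> dual2" and "e > 0" and m: "strict_mono m" and small: "\<And>k. small_tails_at x (p k)"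
    and before: "\<And>k. sqnorm_upto x (m k) (p k) - sqnorm_upto x (m 0) (p k) < e / 4"
    and block: "\<And>k. e < sqnorm_upto x (m (Suc k)) (p k) - sqnorm_upto x (m k) (p k)"
    and after: "\<And>k. sqnorm x (p k) - sqnorm_upto x (m (Suc k)) (p k) < e / 8"
  shows "closure (p ` S) \<inter> closure (p ` (- S)) = {}"
proof -
  obtain B where "\<And>m t. sqnorm_upto x m t \<le> B"
    using dual2_vec_bounded[OF F] unfolding x_def by blast
  then have summable: "summable (\<lambda>i. (cmod (x i t))^2)" for t
    by (rule summable_if_sqnorm_upto_bounded)
  have m_mono: "i \<le> j \<Longrightarrow> m i \<le> m j" for i j using m by (simp add: strict_mono_less_eq)
  define g where "g i t = (if i \<in> block_union m S then cnj (x i t) else 0)" for i t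
  have g: "g i \<in> CX" for i
    using CX_cnj[OF dual2_vec_CX[OF F, of i]]
    by (cases "i \<in> block_union m S") (auto simp: g_def[abs_def] x_def)
  have dominated: "cmod (g i t) \<le> cmod (dual2_vec F i t)" for i t by (simp add: g_def x_def)
  define h where "h t = Re (F (coef_functional g) t)" for t
  have h: "h (p k) = (\<Sum>i. if i \<in> block_union m S then (cmod (x i (p k)))^2 else 0)" for k
  proof -
    have "(\<lambda>i. cnj (x i (p k)) * cnj (g i (p k)))
        = (\<lambda>i. complex_of_real (if i \<in> block_union m S then (cmod (x i (p k)))^2 else 0))"
      by (auto simp: g_def cnj_mult_self fun_eq_iff simp del: of_real_power)
    moreover have "(\<lambda>i. cnj (x i (p k)) * cnj (g i (p k))) sums F (coef_functional g) (p k)"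
      unfolding x_def by (rule dual2_coef_functional_dominated_sums[OF F g dominated small[unfolded x_def]])
    ultimately have "(\<lambda>i. complex_of_real (if i \<in> block_union m S then (cmod (x i (p k)))^2 else 0))
        sums F (coef_functional g) (p k)" by simp
    from sums_Re[OF this] show ?thesis by (simp add: h_def sums_iff)
  qed
  have in_S: "e < h (p k)" if "k \<in> S" for k
  proof -
    have "(\<Sum>i\<in>{m k..<m (Suc k)}. (cmod (x i (p k)))^2) \<le> h (p k)"
      unfolding h by (rule sum_block_le_suminf_restrict[OF summable _ that]) simp
    then show ?thesis
      using block[of k] sqnorm_upto_diff[OF m_mono[of k "Suc k"], of x "p k"] by linarith
  qed
  have not_in_S: "h (p k) < 3 * e / 8" if "k \<notin> S" for k
  proof -
    have "h (p k) \<le> (\<Sum>i\<in>{m 0..<m k}. (cmod (x i (p k)))^2) + (\<Sum>i. (cmod (x (i + m (Suc k)) (p k)))^2)"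
      unfolding h by (rule suminf_restrict_le_outside_block[OF summable _ m that]) simp
    then show ?thesis
      using before[of k] after[of k] sqnorm_upto_diff[OF m_mono[of 0 k], of x "p k"]
        sqnorm_minus_sqnorm_upto[of x "p k" "m (Suc k)", OF summable]
      by linarith
  qed
  have "continuous_on UNIV h"
    using dual2_CX[OF F coef_functional_dominated_dual1[OF F g dominated]]
    by (auto simp: h_def CX_def intro!: continuous_intros)
  then have "closed {t. e \<le> h t}" "closed {t. h t \<le> 3 * e / 8}"
    by (intro closed_Collect_le continuous_on_const, assumption)+
  moreover have "p ` S \<subseteq> {t. e \<le> h t}" "p ` (- S) \<subseteq> {t. h t \<le> 3 * e / 8}"
    using in_S not_in_S by (auto intro: less_imp_le)
  ultimately have "closure (p ` S) \<subseteq> {t. e \<le> h t}" "closure (p ` (- S)) \<subseteq> {t. h t \<le> 3 * e / 8}"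
    by (simp_all add: closure_minimal)
  moreover have "{t. e \<le> h t} \<inter> {t. h t \<le> 3 * e / 8} = {}" using \<open>e > 0\<close> by auto
  ultimately show ?thesis by blast
qed

lemma dual2_vec_l2:
  fixes F :: "'a l2functional \<Rightarrow> 'a \<Rightarrow> complex"
  assumes F: "F \<in> dual2"
    and no_betaN: "\<not> (\<exists>K :: 'a set. closed K \<and> subtopology euclidean K homeomorphic_space betaN)"
  shows "dual2_vec F \<in> l2"
proof (rule ccontr)
  assume not_l2: "dual2_vec F \<notin> l2"
  obtain B where B: "\<And>m t. sqnorm_upto (dual2_vec F) m t \<le> B"
    using dual2_vec_bounded[OF F] by blast
  show False
  proof (rule blocks_of_non_uniform_tail[OF dual2_vec_CX[OF F] B not_l2])
    fix e m p
    assume "e > 0" "strict_mono m" "\<And>k. small_tails_at (dual2_vec F) (p k)"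
      "\<And>k. sqnorm_upto (dual2_vec F) (m k) (p k) - sqnorm_upto (dual2_vec F) (m 0) (p k) < e / 4"
      "\<And>k. e < sqnorm_upto (dual2_vec F) (m (Suc k)) (p k) - sqnorm_upto (dual2_vec F) (m k) (p k)"
      "\<And>k. sqnorm (dual2_vec F) (p k) - sqnorm_upto (dual2_vec F) (m (Suc k)) (p k) < e / 8"
    then have "closure (p ` S) \<inter> closure (p ` (- S)) = {}" for S
      by (rule dual2_vec_blocks_separated[OF F])
    then have "subtopology euclidean (closure (range p)) homeomorphic_space betaN"
      by (rule closure_range_homeomorphic_betaN)
    then show False using no_betaN by blast
  qed
qed

end

theorem theorem4p1:
  assumes "compact (UNIV :: 'a::t2_space set)"
    and "\<not> (\<exists>K :: 'a set. closed K \<and> subtopology euclidean K homeomorphic_space betaN)"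
  shows "l2_C_star_reflexive TYPE('a)"
  unfolding l2_C_star_reflexive_def
proof
  fix F :: "'a l2functional \<Rightarrow> 'a \<Rightarrow> complex"
  assume F: "F \<in> dual2"
  then have x: "dual2_vec F \<in> l2" by (rule dual2_vec_l2[OF assms(1) _ assms(2)])
  then show "\<exists>x\<in>l2. \<forall>\<tau>\<in>dual1. F \<tau> = canonical_l2 x \<tau>"
    using dual2_eq_canonical[OF assms(1) F x] by blast
qed

end
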